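(* Let $N\ge 1$, $\sigma\ge 0$, and let $\psi:[0,2]\to[0,+\infty)$ be a decreasing $C^1$ function with $\psi(2)=0$ and $\psi'(2)<0$. Let initial data $(x_i(0),v_i(0))_{i=1}^N\subset\mathbb{R}^3\times\mathbb{R}^3$ satisfy $\|x_i(0)\|=1$ and $\langle v_i(0),x_i(0)\rangle=0$ for all $i$. Then there exists a unique solution $(x_i,v_i)_{i=1}^N$ of the system $$\dot x_i=v_i,\qquad \dot v_i=-\frac{\|v_i\|^2}{\|x_i\|^2}x_i+\sum_{j=1}^N\frac{\psi_{ij}}{N}\big(R(x_j,x_i)v_j-v_i\big)+\sum_{k=1}^N\frac{\sigma}{N}\big(\|x_i\|^2x_k-\langle x_i,x_k\rangle x_i\big),\quad i=1,\dots,N,$$ with $\psi_{ij}=\psi(\|x_i-x_j\|)$, defined for all time $t\ge 0$. In particular, $\|x_i(t)\|=1$ for all $t>0$ and all $i$.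
   Context: $\|\cdot\|$ is the Euclidean norm and $\langle\cdot,\cdot\rangle$ the standard inner product on $\mathbb{R}^3$; $\mathbb{S}^2$ is the unit sphere. For column vectors $x_1,x_2\in\mathbb{S}^2$ with $x_1\neq -x_2$, the rotation matrix is $R(x_1,x_2)=I$ if $x_1=x_2$, and otherwise $$R(x_1,x_2)=\langle x_1,x_2\rangle I-x_1x_2^T+x_2x_1^T+(1-\langle x_1,x_2\rangle)\,u u^T,\qquad u=\frac{x_1\times x_2}{\|x_1\times x_2\|},$$ where $I$ is the $3\times 3$ identity. $R(x_1,x_2)$ is undefined when $x_1=-x_2$; by convention $\|x_1+x_2\|R(x_1,x_2):=0$ there, and in the system the term $\psi_{ij}R(x_j,x_i)v_j$ is taken to be $0$ when $x_j=-x_i$ (consistent with $\psi(2)=0$). *)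

theory Defs
  imports "HOL-Analysis.Analysis"
begin

definition outer3 :: "real^3 \<Rightarrow> real^3 \<Rightarrow> real^3^3" where
  "outer3 a b = (\<chi> i j. a $ i * b $ j)"

text \<open>Rotation matrix R(x1,x2); R = I if x1 = x2; set to 0 when x1 = -x2
  (convention: the term psi_ij R(x_j,x_i) v_j is 0 there).\<close>
definition rotR :: "real^3 \<Rightarrow> real^3 \<Rightarrow> real^3^3" where
  "rotR x1 x2 =
     (if x1 = x2 then mat 1
      else if x1 = - x2 then 0
      else (let u = (1 / norm (cross3 x1 x2)) *\<^sub>R cross3 x1 x2 in
            (x1 \<bullet> x2) *\<^sub>R mat 1 - outer3 x1 x2 + outer3 x2 x1
            + (1 - x1 \<bullet> x2) *\<^sub>R outer3 u u))"

text \<open>psi is given on [0,2]; for arguments beyond 2 we use its continuous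
  extension by psi(2) = 0 (never used along solutions on the sphere).\<close>
definition psi_ext :: "(real \<Rightarrow> real) \<Rightarrow> real \<Rightarrow> real" where
  "psi_ext \<psi> r = (if r \<le> 2 then \<psi> r else 0)"

definition accel ::
  "nat \<Rightarrow> (real \<Rightarrow> real) \<Rightarrow> real \<Rightarrow> (nat \<Rightarrow> real \<Rightarrow> real^3) \<Rightarrow> (nat \<Rightarrow> real \<Rightarrow> real^3)
   \<Rightarrow> nat \<Rightarrow> real \<Rightarrow> real^3" where
  "accel N \<psi> \<sigma> x v i t =
     - ((norm (v i t))\<^sup>2 / (norm (x i t))\<^sup>2) *\<^sub>R x i t
     + (\<Sum>j<N. (psi_ext \<psi> (norm (x i t - x j t)) / real N) *\<^sub>R
                 (rotR (x j t) (x i t) *v v j t - v i t))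
     + (\<Sum>k<N. (\<sigma> / real N) *\<^sub>R
                 ((norm (x i t))\<^sup>2 *\<^sub>R x k t - (x i t \<bullet> x k t) *\<^sub>R x i t))"

definition is_solution ::
  "nat \<Rightarrow> (real \<Rightarrow> real) \<Rightarrow> real \<Rightarrow> (nat \<Rightarrow> real^3) \<Rightarrow> (nat \<Rightarrow> real^3)
   \<Rightarrow> (nat \<Rightarrow> real \<Rightarrow> real^3) \<Rightarrow> (nat \<Rightarrow> real \<Rightarrow> real^3) \<Rightarrow> bool" where
  "is_solution N \<psi> \<sigma> x0 v0 x v \<longleftrightarrow>
     (\<forall>i<N. x i 0 = x0 i \<and> v i 0 = v0 i \<and>
        (\<forall>t\<ge>0. (x i has_vector_derivative v i t) (at t within {0..}) \<and>
               (v i has_vector_derivative accel N \<psi> \<sigma> x v i t) (at t within {0..})))"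

end

theory Submission
  imports Defs
begin

definition dist_sum :: "nat \<Rightarrow> (nat \<Rightarrow> 'a::real_normed_vector) \<Rightarrow> (nat \<Rightarrow> 'a) \<Rightarrow> real" where
  "dist_sum N Y Y' = (\<Sum>i<N. norm (Y i - Y' i))"

lemma dist_sum_nonneg: "0 \<le> dist_sum N Y Y'"
  unfolding dist_sum_def by (simp add: sum_nonneg)

lemma dist_sum_commute: "dist_sum N Y Y' = dist_sum N Y' Y"
  unfolding dist_sum_def by (simp add: norm_minus_commute)

lemma dist_sum_triangle: "dist_sum N Y Y'' \<le> dist_sum N Y Y' + dist_sum N Y' Y''"
  unfolding dist_sum_def sum.distrib[symmetric]
  by (rule sum_mono) (metis diff_add_cancel add_diff_eq norm_triangle_ineq)

lemma dist_sum_self [simp]: "dist_sum N Y Y = 0"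
  unfolding dist_sum_def by simp

lemma norm_le_dist_sum: "i < N \<Longrightarrow> norm (Y i - Y' i) \<le> dist_sum N Y Y'"
  unfolding dist_sum_def by (rule member_le_sum) auto

lemma integral_monomial:
  assumes "0 \<le> t"
  shows "integral {0..t} (\<lambda>s. c * s ^ n) = c * t ^ Suc n / Suc n"
proof -
  have "((\<lambda>s. c * s ^ n) has_integral (c / Suc n * t ^ Suc n - c / Suc n * 0 ^ Suc n)) {0..t}"
  proof (rule fundamental_theorem_of_calculus[OF assms])
    fix x :: real
    have "((\<lambda>s. c / Suc n * s ^ Suc n) has_real_derivative c / Suc n * (Suc n * x ^ n)) (at x)"
      using DERIV_pow[of "Suc n" x] by (intro DERIV_cmult) simp
    then show "((\<lambda>s. c / Suc n * s ^ Suc n) has_vector_derivative c * x ^ n) (at x within {0..t})"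
      by (simp add: has_real_derivative_iff_has_vector_derivative has_vector_derivative_at_within
          del: of_nat_Suc)
  qed
  then show ?thesis
    by (rule integral_unique[THEN trans]) simp
qed

lemma uniform_limit_sum:
  fixes f :: "'i \<Rightarrow> 'n \<Rightarrow> 'x \<Rightarrow> 'a::real_normed_vector"
  assumes "finite I" and "\<And>j. j \<in> I \<Longrightarrow> uniform_limit S (f j) (g j) F"
  shows "uniform_limit S (\<lambda>n s. \<Sum>j\<in>I. f j n s) (\<lambda>s. \<Sum>j\<in>I. g j s) F"
  using assms by (induction I rule: finite_induct) (auto intro!: uniform_limit_intros)

lemma gronwall_nonpos:
  fixes q q' :: "real \<Rightarrow> real"
  assumes q0: "q 0 \<le> 0"
    and deriv: "\<And>t. t \<in> {0..T} \<Longrightarrow> (q has_real_derivative q' t) (at t within {0..T})"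
    and growth: "\<And>t. t \<in> {0..T} \<Longrightarrow> q' t \<le> C * q t"
    and t: "t \<in> {0..T}"
  shows "q t \<le> 0"
proof -
  define h where "h s = exp (- C * s) * q s" for s
  define h' where "h' s = exp (- C * s) * (q' s - C * q s)" for s
  have "(h has_derivative (\<lambda>d. d * h' x)) (at x within {0..t})" if "0 \<le> x" "x \<le> t" for x
  proof -
    have "(q has_real_derivative q' x) (at x within {0..t})"
      using deriv[of x] that t by (auto intro: has_field_derivative_subset)
    then have "(h has_real_derivative h' x) (at x within {0..t})"
      unfolding h_def h'_def by (auto intro!: derivative_eq_intros simp: algebra_simps)
    moreover have "(\<lambda>d. d * h' x) = (*) (h' x)"
      by auto
    ultimately show ?thesis
      by (simp add: has_field_derivative_def)
  qed
  then obtain x where x: "x \<in> {0..t}" and mvt: "h t - h 0 = (t - 0) * h' x"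
    using mvt_very_simple[of 0 t h "\<lambda>x d. d * h' x"] t by auto
  have "h' x \<le> 0"
    unfolding h'_def using growth[of x] x t by (intro mult_nonneg_nonpos) auto
  with x mvt have "h t \<le> h 0"
    by (smt (verit) atLeastAtMost_iff mult_nonneg_nonpos)
  with q0 have "exp (- C * t) * q t \<le> 0"
    by (simp add: h_def)
  then show ?thesis
    by (simp add: mult_le_0_iff)
qed

locale lipschitz_system =
  fixes G :: "(nat \<Rightarrow> 'a::banach) \<Rightarrow> nat \<Rightarrow> 'a" and L :: real and N :: nat
  assumes L_nonneg: "0 \<le> L"
    and lipschitz: "\<And>Y Y' i. i < N \<Longrightarrow> norm (G Y i - G Y' i) \<le> L * dist_sum N Y Y'"
begin

definition solves_from :: "(nat \<Rightarrow> 'a) \<Rightarrow> (real \<Rightarrow> nat \<Rightarrow> 'a) \<Rightarrow> bool" where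
  "solves_from Z0 Z \<longleftrightarrow> (\<forall>i<N. Z 0 i = Z0 i \<and>
     (\<forall>t\<ge>0. ((\<lambda>t. Z t i) has_vector_derivative G (Z t) i) (at t within {0..})))"

lemma continuous_on_field:
  assumes i: "i < N" and Y: "\<And>j. j < N \<Longrightarrow> continuous_on S (\<lambda>s. Y s j)"
  shows "continuous_on S (\<lambda>s. G (Y s) i)"
  unfolding continuous_on_def
proof
  fix s assume s: "s \<in> S"
  have "((\<lambda>s'. L * (\<Sum>j<N. norm (Y s' j - Y s j))) \<longlongrightarrow> L * (\<Sum>j<N. norm (Y s j - Y s j))) (at s within S)"
    using Y s by (intro tendsto_intros) (auto simp: continuous_on_def)
  then have "((\<lambda>s'. L * dist_sum N (Y s') (Y s)) \<longlongrightarrow> 0) (at s within S)"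
    by (simp add: dist_sum_def)
  moreover have "\<forall>\<^sub>F s' in at s within S. norm (G (Y s') i - G (Y s) i) \<le> L * dist_sum N (Y s') (Y s)"
    using lipschitz[OF i] by (intro always_eventually) blast
  ultimately have "((\<lambda>s'. G (Y s') i - G (Y s) i) \<longlongrightarrow> 0) (at s within S)"
    by (rule Lim_null_comparison[rotated])
  then show "((\<lambda>s'. G (Y s') i) \<longlongrightarrow> G (Y s) i) (at s within S)"
    by (simp add: LIM_zero_iff)
qed

lemma uniform_limit_field:
  assumes i: "i < N"
    and Y: "\<And>j. j < N \<Longrightarrow> uniform_limit S (\<lambda>n s. Y n s j) (\<lambda>s. Y' s j) F"
  shows "uniform_limit S (\<lambda>n s. G (Y n s) i) (\<lambda>s. G (Y' s) i) F"
proof -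
  have "uniform_limit S (\<lambda>n s. norm (Y n s j - Y' s j)) (\<lambda>s. norm (Y' s j - Y' s j)) F" if "j < N" for j
    by (intro uniform_limit_norm uniform_limit_minus uniform_limit_const Y that)
  then have "uniform_limit S (\<lambda>n s. \<Sum>j<N. norm (Y n s j - Y' s j)) (\<lambda>s. \<Sum>j<N. norm (Y' s j - Y' s j)) F"
    by (intro uniform_limit_sum) auto
  then have "uniform_limit S (\<lambda>n s. L * dist_sum N (Y n s) (Y' s)) (\<lambda>_. 0) F"
    unfolding dist_sum_def by (rule bounded_linear.uniform_limit[OF bounded_linear_mult_right, THEN uniform_limit_eq_rhs]) simp
  moreover have "\<forall>\<^sub>F n in F. \<forall>s\<in>S. norm (G (Y n s) i - G (Y' s) i) \<le> L * dist_sum N (Y n s) (Y' s)"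
    using lipschitz[OF i] by (intro always_eventually) blast
  ultimately have "uniform_limit S (\<lambda>n s. G (Y n s) i - G (Y' s) i) (\<lambda>_. 0) F"
    by (rule uniform_limit_null_comparison[rotated])
  then have "uniform_limit S (\<lambda>n s. (G (Y n s) i - G (Y' s) i) + G (Y' s) i) (\<lambda>s. 0 + G (Y' s) i) F"
    by (intro uniform_limit_add uniform_limit_const)
  then show ?thesis
    by simp
qed


primrec picard_iter :: "(nat \<Rightarrow> 'a) \<Rightarrow> nat \<Rightarrow> real \<Rightarrow> nat \<Rightarrow> 'a" where
  "picard_iter Z0 0 = (\<lambda>t. Z0)"
| "picard_iter Z0 (Suc n) = (\<lambda>t i. Z0 i + integral {0..t} (\<lambda>s. G (picard_iter Z0 n s) i))"

declare picard_iter.simps(2) [simp del]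

lemma picard_iter_Suc_apply:
  "picard_iter Z0 (Suc n) t i = Z0 i + integral {0..t} (\<lambda>s. G (picard_iter Z0 n s) i)"
  by (simp add: picard_iter.simps(2))

lemma picard_iter_continuous: "j < N \<Longrightarrow> continuous_on {0..T} (\<lambda>t. picard_iter Z0 n t j)"
proof (induction n arbitrary: j T)
  case 0
  then show ?case by simp
next
  case (Suc n)
  have field: "continuous_on {0..T} (\<lambda>s. G (picard_iter Z0 n s) j)"
    using Suc by (intro continuous_on_field)
  have "continuous_on {0..T} (\<lambda>t. integral {0..t} (\<lambda>s. G (picard_iter Z0 n s) j))"
    unfolding continuous_on_eq_continuous_within
    using integral_has_vector_derivative[OF field] has_vector_derivative_continuous by blast
  then show ?case
    by (auto simp: picard_iter_Suc_apply intro!: continuous_intros)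
qed

lemma picard_iter_step:
  assumes i: "i < N" and t: "0 \<le> t"
    and prev: "\<And>s. s \<in> {0..t} \<Longrightarrow> dist_sum N (picard_iter Z0 (Suc n) s) (picard_iter Z0 n s) \<le> C * s ^ n"
  shows "norm (picard_iter Z0 (Suc (Suc n)) t i - picard_iter Z0 (Suc n) t i) \<le> L * C * t ^ Suc n / Suc n"
proof -
  have cont: "continuous_on {0..t} (\<lambda>s. G (picard_iter Z0 m s) i)" for m
    using i by (intro continuous_on_field picard_iter_continuous)
  have "picard_iter Z0 (Suc (Suc n)) t i - picard_iter Z0 (Suc n) t i
      = integral {0..t} (\<lambda>s. G (picard_iter Z0 (Suc n) s) i - G (picard_iter Z0 n s) i)"
    using integral_diff[OF integrable_continuous_real[OF cont] integrable_continuous_real[OF cont]]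
    unfolding picard_iter_Suc_apply[of _ "Suc n" t] picard_iter_Suc_apply[of _ n t] by simp
  also have "norm \<dots> \<le> integral {0..t} (\<lambda>s. L * C * s ^ n)"
  proof (rule integral_norm_bound_integral)
    show "(\<lambda>s. G (picard_iter Z0 (Suc n) s) i - G (picard_iter Z0 n s) i) integrable_on {0..t}"
      by (intro integrable_diff integrable_continuous_real cont)
    show "(\<lambda>s. L * C * s ^ n) integrable_on {0..t}"
      by (intro integrable_continuous_real continuous_intros)
    fix s assume s: "s \<in> {0..t}"
    have "norm (G (picard_iter Z0 (Suc n) s) i - G (picard_iter Z0 n s) i)
        \<le> L * dist_sum N (picard_iter Z0 (Suc n) s) (picard_iter Z0 n s)"
      by (rule lipschitz[OF i])
    also have "\<dots> \<le> L * (C * s ^ n)"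
      using prev[OF s] by (intro mult_left_mono L_nonneg)
    finally show "norm (G (picard_iter Z0 (Suc n) s) i - G (picard_iter Z0 n s) i) \<le> L * C * s ^ n"
      by (simp add: mult.assoc)
  qed
  also have "\<dots> = L * C * t ^ Suc n / Suc n"
    by (rule integral_monomial[OF t])
  finally show ?thesis .
qed

lemma picard_iter_dist_bound:
  assumes "0 \<le> t" "t \<le> T"
  shows "dist_sum N (picard_iter Z0 (Suc n) t) (picard_iter Z0 n t)
    \<le> T * (\<Sum>i<N. norm (G Z0 i)) * (N * L * t) ^ n / fact n"
  using assms
proof (induction n arbitrary: t)
  case 0
  have "dist_sum N (picard_iter Z0 (Suc 0) t) (picard_iter Z0 0 t) = t * (\<Sum>i<N. norm (G Z0 i))"
    using 0 by (simp add: dist_sum_def sum_distrib_left picard_iter_Suc_apply)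
  also have "\<dots> \<le> T * (\<Sum>i<N. norm (G Z0 i))"
    using 0 by (intro mult_right_mono) (auto simp: sum_nonneg)
  finally show ?case by simp
next
  case (Suc n)
  define C where "C = T * (\<Sum>i<N. norm (G Z0 i)) * (N * L) ^ n / fact n"
  have "norm (picard_iter Z0 (Suc (Suc n)) t i - picard_iter Z0 (Suc n) t i) \<le> L * C * t ^ Suc n / Suc n"
    if "i < N" for i
  proof (rule picard_iter_step[OF that])
    fix s assume "s \<in> {0..t}"
    then show "dist_sum N (picard_iter Z0 (Suc n) s) (picard_iter Z0 n s) \<le> C * s ^ n"
      using Suc.IH[of s] Suc.prems by (simp add: C_def power_mult_distrib divide_simps ac_simps)
  qed (use Suc.prems in simp)
  then have "dist_sum N (picard_iter Z0 (Suc (Suc n)) t) (picard_iter Z0 (Suc n) t)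
      \<le> (\<Sum>i<N. L * C * t ^ Suc n / Suc n)"
    unfolding dist_sum_def by (intro sum_mono) auto
  also have "\<dots> = T * (\<Sum>i<N. norm (G Z0 i)) * (N * L * t) ^ Suc n / fact (Suc n)"
    by (simp add: C_def power_mult_distrib field_simps del: of_nat_Suc)
  finally show ?case .
qed


definition picard_limit :: "(nat \<Rightarrow> 'a) \<Rightarrow> real \<Rightarrow> nat \<Rightarrow> 'a" where
  "picard_limit Z0 t i = Z0 i + (\<Sum>k. picard_iter Z0 (Suc k) t i - picard_iter Z0 k t i)"

lemma uniform_limit_picard_iter:
  assumes i: "i < N" and T: "0 \<le> T"
  shows "uniform_limit {0..T} (\<lambda>n t. picard_iter Z0 n t i) (\<lambda>t. picard_limit Z0 t i) sequentially"
proof -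
  define M where "M = (\<Sum>i<N. norm (G Z0 i))"
  have M: "0 \<le> M"
    unfolding M_def by (simp add: sum_nonneg)
  have "summable (\<lambda>k. T * M * (inverse (fact k) * (N * L * T) ^ k))"
    by (intro summable_mult summable_exp)
  then have "summable (\<lambda>k. T * M * (N * L * T) ^ k / fact k)"
    by (simp add: field_simps)
  then have "uniform_limit {0..T} (\<lambda>n t. \<Sum>k<n. picard_iter Z0 (Suc k) t i - picard_iter Z0 k t i)
      (\<lambda>t. \<Sum>k. picard_iter Z0 (Suc k) t i - picard_iter Z0 k t i) sequentially"
  proof (rule Weierstrass_m_test[rotated])
    fix k t assume t: "t \<in> {0..T}"
    have "norm (picard_iter Z0 (Suc k) t i - picard_iter Z0 k t i)
        \<le> dist_sum N (picard_iter Z0 (Suc k) t) (picard_iter Z0 k t)"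
      by (rule norm_le_dist_sum[OF i])
    also have "\<dots> \<le> T * M * (N * L * t) ^ k / fact k"
      using picard_iter_dist_bound[of t T Z0 k] t by (simp add: M_def)
    also have "\<dots> \<le> T * M * (N * L * T) ^ k / fact k"
      using t T M L_nonneg by (intro divide_right_mono mult_left_mono power_mono) auto
    finally show "norm (picard_iter Z0 (Suc k) t i - picard_iter Z0 k t i) \<le> T * M * (N * L * T) ^ k / fact k" .
  qed
  moreover have "(\<Sum>k<n. picard_iter Z0 (Suc k) t i - picard_iter Z0 k t i) = picard_iter Z0 n t i - Z0 i" for n t
    using sum_lessThan_telescope[of "\<lambda>k. picard_iter Z0 k t i" n] by simp
  ultimately have "uniform_limit {0..T} (\<lambda>n t. Z0 i + (picard_iter Z0 n t i - Z0 i)) (\<lambda>t. picard_limit Z0 t i) sequentially"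
    unfolding picard_limit_def by (intro uniform_limit_add uniform_limit_const) simp
  then show ?thesis
    by simp
qed

lemma picard_limit_continuous:
  assumes "i < N" "0 \<le> T"
  shows "continuous_on {0..T} (\<lambda>t. picard_limit Z0 t i)"
  using assms by (intro uniform_limit_theorem[OF always_eventually uniform_limit_picard_iter])
    (auto intro: picard_iter_continuous)

lemma picard_limit_integral_eq:
  assumes i: "i < N" and t: "0 \<le> t"
  shows "picard_limit Z0 t i = Z0 i + integral {0..t} (\<lambda>s. G (picard_limit Z0 s) i)"
proof -
  have lim: "uniform_limit {0..t} (\<lambda>n s. G (picard_iter Z0 n s) i) (\<lambda>s. G (picard_limit Z0 s) i) sequentially"
    using i t by (intro uniform_limit_field uniform_limit_picard_iter)
  have cont: "continuous_on {0..t} (\<lambda>s. G (picard_iter Z0 n s) i)" for n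
    using i by (intro continuous_on_field picard_iter_continuous)
  obtain I J where I: "\<And>n. ((\<lambda>s. G (picard_iter Z0 n s) i) has_integral I n) {0..t}"
    and J: "((\<lambda>s. G (picard_limit Z0 s) i) has_integral J) {0..t}" and IJ: "I \<longlonglongrightarrow> J"
    by (rule uniform_limit_integral[OF lim cont]) auto
  have "(\<lambda>n. picard_iter Z0 (Suc n) t i) \<longlonglongrightarrow> picard_limit Z0 t i"
    using tendsto_uniform_limitI[OF uniform_limit_picard_iter[OF i t], of t] t by (intro LIMSEQ_Suc) auto
  moreover have "(\<lambda>n. picard_iter Z0 (Suc n) t i) = (\<lambda>n. Z0 i + I n)"
    using I by (auto simp: picard_iter_Suc_apply integral_unique)
  moreover have "(\<lambda>n. Z0 i + I n) \<longlonglongrightarrow> Z0 i + J"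
    using IJ by (intro tendsto_intros)
  ultimately have "picard_limit Z0 t i = Z0 i + J"
    using LIMSEQ_unique by metis
  then show ?thesis
    using J by (simp add: integral_unique)
qed

theorem exists_solution: "solves_from Z0 (picard_limit Z0)"
  unfolding solves_from_def
proof (intro allI impI conjI)
  fix i assume i: "i < N"
  show "picard_limit Z0 0 i = Z0 i"
    using picard_limit_integral_eq[OF i, of 0] by simp
  fix t :: real assume t: "0 \<le> t"
  have "continuous_on {0..t + 1} (\<lambda>s. G (picard_limit Z0 s) i)"
    using i t by (intro continuous_on_field picard_limit_continuous) auto
  then have "((\<lambda>u. Z0 i + integral {0..u} (\<lambda>s. G (picard_limit Z0 s) i)) has_vector_derivative
      G (picard_limit Z0 t) i) (at t within {0..t + 1})"
    using t by (auto intro!: derivative_eq_intros integral_has_vector_derivative)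
  then have "((\<lambda>u. picard_limit Z0 u i) has_vector_derivative G (picard_limit Z0 t) i) (at t within {0..t + 1})"
    by (rule has_vector_derivative_transform[rotated 2]) (use t picard_limit_integral_eq[OF i] in auto)
  moreover have "at t within {0..t + 1} = at t within {0..}"
    by (rule at_within_nhd[where S = "{..<t + 1}"]) auto
  ultimately show "((\<lambda>u. picard_limit Z0 u i) has_vector_derivative G (picard_limit Z0 t) i) (at t within {0..})"
    by simp
qed


theorem solution_unique:
  assumes Z1: "solves_from Z0 Z1" and Z2: "solves_from Z0 Z2" and i: "i < N" and t: "0 \<le> t"
  shows "Z1 t i = Z2 t i"
proof -
  define D where "D s = dist_sum N (Z1 s) (Z2 s)" for s
  have deriv: "((\<lambda>r. Z r j) has_vector_derivative G (Z r) j) (at r within {0..s})"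
    if "Z = Z1 \<or> Z = Z2" "j < N" "r \<in> {0..s}" for Z j r s
  proof (rule has_vector_derivative_within_subset)
    show "((\<lambda>r. Z r j) has_vector_derivative G (Z r) j) (at r within {0..})"
      using that Z1 Z2 unfolding solves_from_def by auto
  qed auto
  have cont: "continuous_on {0..s} (\<lambda>r. Z r j)" if "Z = Z1 \<or> Z = Z2" "j < N" for Z j s
    using deriv[OF that] by (meson continuous_on_eq_continuous_within has_vector_derivative_continuous)
  have D_cont: "continuous_on {0..t} D"
    unfolding D_def dist_sum_def using cont by (intro continuous_intros) auto
  have D_le: "D s \<le> N * L * integral {0..s} D" if s: "s \<in> {0..t}" for s
  proof -
    have "norm (Z1 s j - Z2 s j) \<le> L * integral {0..s} D" if j: "j < N" for j
    proof -
      have "((\<lambda>r. G (Z1 r) j - G (Z2 r) j) has_integral (Z1 s j - Z1 0 j) - (Z2 s j - Z2 0 j)) {0..s}"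
        using s j deriv by (intro has_integral_diff fundamental_theorem_of_calculus) auto
      then have "Z1 s j - Z2 s j = integral {0..s} (\<lambda>r. G (Z1 r) j - G (Z2 r) j)"
        using Z1 Z2 j by (auto simp: solves_from_def integral_unique)
      also have "norm \<dots> \<le> integral {0..s} (\<lambda>r. L * D r)"
      proof (rule integral_norm_bound_integral)
        show "(\<lambda>r. G (Z1 r) j - G (Z2 r) j) integrable_on {0..s}"
          using j s cont by (intro integrable_continuous_real continuous_intros continuous_on_field) auto
        show "(\<lambda>r. L * D r) integrable_on {0..s}"
          using s by (intro integrable_continuous_real continuous_intros continuous_on_subset[OF D_cont]) auto
      qed (use lipschitz[OF j] in \<open>simp add: D_def\<close>)
      also have "\<dots> = L * integral {0..s} D"
        by simp
      finally show ?thesis .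
    qed
    then have "D s \<le> (\<Sum>j<N. L * integral {0..s} D)"
      unfolding D_def dist_sum_def by (intro sum_mono) simp
    then show ?thesis
      by simp
  qed
  define u where "u s = integral {0..s} D" for s
  have "u t \<le> 0"
  proof (rule gronwall_nonpos[where q = u and q' = D and C = "N * L" and T = t])
    fix s assume s: "s \<in> {0..t}"
    show "(u has_real_derivative D s) (at s within {0..t})"
      unfolding u_def has_real_derivative_iff_has_vector_derivative
      by (rule integral_has_vector_derivative[OF D_cont s])
    show "D s \<le> N * L * u s"
      using D_le[OF s] by (simp add: u_def)
  qed (use t in \<open>auto simp: u_def\<close>)
  have "norm (Z1 t i - Z2 t i) \<le> D t"
    unfolding D_def by (rule norm_le_dist_sum[OF i])
  also have "\<dots> \<le> N * L * u t"
    using D_le[of t] t by (simp add: u_def)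
  also have "\<dots> \<le> 0"
    using \<open>u t \<le> 0\<close> L_nonneg by (simp add: mult_nonneg_nonpos)
  finally show ?thesis
    by simp
qed

end

lemma outer3_mult_vec: "outer3 a b *v v = (b \<bullet> v) *\<^sub>R a"
  by (simp add: vec_eq_iff matrix_vector_mult_def outer3_def inner_vec_def sum_3 algebra_simps)

lemma rotR_mult_vec:
  assumes "x1 \<noteq> x2" "x1 \<noteq> - x2"
  shows "rotR x1 x2 *v v
    = (x1 \<bullet> x2) *\<^sub>R v - (x2 \<bullet> v) *\<^sub>R x1 + (x1 \<bullet> v) *\<^sub>R x2
      + ((1 - x1 \<bullet> x2) * ((1 / norm (cross3 x1 x2)) *\<^sub>R cross3 x1 x2 \<bullet> v))
        *\<^sub>R ((1 / norm (cross3 x1 x2)) *\<^sub>R cross3 x1 x2)"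
  using assms
  by (simp add: rotR_def Let_def matrix_vector_mult_add_rdistrib matrix_vector_mult_diff_rdistrib
      scaleR_matrix_vector_assoc[symmetric] matrix_vector_mul_lid outer3_mult_vec)

lemma inner_rotR_mult_vec:
  "x2 \<bullet> (rotR x1 x2 *v v)
    = (if x1 = - x2 then 0 else if x1 = x2 then x1 \<bullet> v else (x2 \<bullet> x2) * (x1 \<bullet> v))"
proof -
  consider "x1 = - x2" | "x1 = x2" "x1 \<noteq> - x2" | "x1 \<noteq> x2" "x1 \<noteq> - x2"
    by blast
  then show ?thesis
  proof cases
    case 1
    then have "x1 = x2 \<Longrightarrow> x2 = 0"
      by (metis add.inverse_neutral scaleR_2 add_eq_0_iff scaleR_eq_0_iff zero_neq_numeral)
    with 1 show ?thesis
      by (auto simp: rotR_def)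
  next
    case 2
    then show ?thesis by (simp add: rotR_def matrix_vector_mul_lid)
  next
    case 3
    then show ?thesis
      by (simp add: rotR_mult_vec inner_add_right inner_diff_right dot_cross_self algebra_simps
          inner_commute)
  qed
qed

lemma norm_cross3_le: "norm (cross3 a b) \<le> norm a * norm b"
proof (rule power2_le_imp_le)
  show "(norm (cross3 a b))\<^sup>2 \<le> (norm a * norm b)\<^sup>2"
    using norm_cross[of a b] by (simp add: power_mult_distrib)
qed simp

lemma norm_diff_unit_le_2:
  fixes a b :: "'a::real_normed_vector"
  shows "norm a = 1 \<Longrightarrow> norm b = 1 \<Longrightarrow> norm (b - a) \<in> {0..2}"
  using norm_triangle_ineq4[of b a] by auto

lemma unit_inner_facts:
  fixes a b :: "'a::real_inner"
  assumes "norm a = 1" "norm b = 1"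
  shows "(norm (b - a))\<^sup>2 = 2 - 2 * (a \<bullet> b)" and "(norm (b + a))\<^sup>2 = 2 + 2 * (a \<bullet> b)"
    and "\<bar>a \<bullet> b\<bar> \<le> 1"
proof -
  have "a \<bullet> a = 1" "b \<bullet> b = 1"
    using assms by (simp_all add: power2_norm_eq_inner[symmetric])
  then show "(norm (b - a))\<^sup>2 = 2 - 2 * (a \<bullet> b)" "(norm (b + a))\<^sup>2 = 2 + 2 * (a \<bullet> b)"
    by (simp_all add: power2_norm_eq_inner inner_diff inner_add inner_commute)
  show "\<bar>a \<bullet> b\<bar> \<le> 1"
    using Cauchy_Schwarz_ineq2[of a b] assms by simp
qed

lemma one_plus_inner_unit_pos:
  fixes a b :: "'a::real_inner"
  assumes "norm a = 1" "norm b = 1" "a \<noteq> - b"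
  shows "0 < 1 + a \<bullet> b"
proof -
  have "b + a \<noteq> 0"
    using assms(3) by (metis add.commute add_eq_0_iff)
  then show ?thesis
    using unit_inner_facts(2)[OF assms(1,2)] by (smt (verit) zero_less_power2 zero_less_norm_iff)
qed

definition rot_core :: "real^3 \<Rightarrow> real^3 \<Rightarrow> real^3 \<Rightarrow> real^3" where
  "rot_core a b v = (a \<bullet> b) *\<^sub>R v + cross3 (cross3 a b) v"

text \<open>On the sphere the normalisation of the rotation axis cancels: since
  norm (a \<times> b) ^ 2 = (1 - a \<bullet> b) (1 + a \<bullet> b), the coefficient (1 - a \<bullet> b) / norm (a \<times> b) ^ 2
  of the axial part is 1 / (1 + a \<bullet> b), which stays bounded as long as a \<noteq> - b.\<close>
lemma rotR_mult_vec_unit: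
  assumes a: "norm a = 1" and b: "norm b = 1" and ab: "a \<noteq> - b"
  shows "rotR a b *v v = rot_core a b v + ((cross3 a b \<bullet> v) / (1 + a \<bullet> b)) *\<^sub>R cross3 a b"
proof (cases "a = b")
  case True
  then show ?thesis
    using a by (simp add: rotR_def rot_core_def matrix_vector_mul_lid power2_norm_eq_inner[symmetric])
next
  case False
  define c where "c = a \<bullet> b"
  define w where "w = cross3 a b"
  have "(norm (b - a))\<^sup>2 > 0"
    using False by simp
  then have c1: "c < 1"
    using unit_inner_facts(1)[OF a b] by (simp add: c_def)
  have c2: "0 < 1 + c"
    using one_plus_inner_unit_pos[OF a b ab] by (simp add: c_def)
  have nw: "(norm w)\<^sup>2 = (1 - c) * (1 + c)"
    using norm_cross[of a b] a b by (simp add: w_def c_def power2_eq_square algebra_simps)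
  have axial: "(1 - c) * ((1 / norm w) *\<^sub>R w \<bullet> v) * (1 / norm w) = (w \<bullet> v) / (1 + c)"
  proof -
    have "(1 - c) * ((1 / norm w) *\<^sub>R w \<bullet> v) * (1 / norm w) = (1 - c) * (w \<bullet> v) / (norm w)\<^sup>2"
      by (simp add: power2_eq_square)
    also have "\<dots> = (w \<bullet> v) / (1 + c)"
      using c1 by (simp add: nw)
    finally show ?thesis .
  qed
  have "rotR a b *v v = c *\<^sub>R v - (b \<bullet> v) *\<^sub>R a + (a \<bullet> v) *\<^sub>R b
      + ((1 - c) * ((1 / norm w) *\<^sub>R w \<bullet> v)) *\<^sub>R ((1 / norm w) *\<^sub>R w)"
    using rotR_mult_vec[OF False ab] by (simp add: c_def w_def)
  also have "((1 - c) * ((1 / norm w) *\<^sub>R w \<bullet> v)) *\<^sub>R ((1 / norm w) *\<^sub>R w) = ((w \<bullet> v) / (1 + c)) *\<^sub>R w"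
    using axial by (simp only: scaleR_scaleR)
  finally have R: "rotR a b *v v = c *\<^sub>R v - (b \<bullet> v) *\<^sub>R a + (a \<bullet> v) *\<^sub>R b + ((w \<bullet> v) / (1 + c)) *\<^sub>R w" .
  have "cross3 w v = (a \<bullet> v) *\<^sub>R b - (b \<bullet> v) *\<^sub>R a"
    using Lagrange[of v a b] cross_skew[of w v] by (simp add: w_def inner_commute)
  then show ?thesis
    unfolding R rot_core_def c_def[symmetric] w_def[symmetric] by simp
qed

lemma norm_rotR_mult_vec_le:
  assumes a: "norm a = 1" and b: "norm b = 1"
  shows "norm (rotR a b *v v) \<le> norm v"
proof (cases "a = - b")
  case True
  then show ?thesis
    by (simp add: rotR_def)
next
  case False
  define c where "c = a \<bullet> b"
  define w where "w = cross3 a b"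
  define p where "p = w \<bullet> v"
  have c2: "0 < 1 + c"
    using one_plus_inner_unit_pos[OF a b False] by (simp add: c_def)
  have nw: "w \<bullet> w = 1 - c\<^sup>2"
    using norm_cross[of a b] a b by (simp add: w_def c_def power2_norm_eq_inner)
  have nwv: "cross3 w v \<bullet> cross3 w v = (w \<bullet> w) * (v \<bullet> v) - p\<^sup>2"
    using norm_cross[of w v] by (simp add: power2_norm_eq_inner p_def)
  have "rotR a b *v v = c *\<^sub>R v + cross3 w v + (p / (1 + c)) *\<^sub>R w"
    using rotR_mult_vec_unit[OF a b False] by (simp add: rot_core_def c_def w_def p_def)
  then have "(rotR a b *v v) \<bullet> (rotR a b *v v)
      = c\<^sup>2 * (v \<bullet> v) + cross3 w v \<bullet> cross3 w v + (p / (1 + c))\<^sup>2 * (w \<bullet> w) + 2 * c * (p / (1 + c)) * p"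
    by (simp add: dot_cross_self inner_add_left inner_add_right inner_commute p_def power2_eq_square
        algebra_simps)
  also have "\<dots> = v \<bullet> v"
  proof -
    define r where "r = p / (1 + c)"
    have "p = r * (1 + c)"
      using c2 by (simp add: r_def)
    then have "r\<^sup>2 * (1 - c\<^sup>2) + 2 * c * r * p = p\<^sup>2"
      by (simp add: power2_eq_square algebra_simps)
    then show ?thesis
      unfolding nwv nw r_def by (simp add: algebra_simps)
  qed
  finally show ?thesis
    by (simp add: norm_eq_sqrt_inner)
qed

lemma abs_inner_diff_le:
  fixes a b :: "'a::real_inner"
  shows "\<bar>a \<bullet> b - a' \<bullet> b'\<bar> \<le> norm (a - a') * norm b + norm a' * norm (b - b')"
proof -
  have "a \<bullet> b - a' \<bullet> b' = (a - a') \<bullet> b + a' \<bullet> (b - b')"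
    by (simp add: inner_diff)
  then have "\<bar>a \<bullet> b - a' \<bullet> b'\<bar> \<le> \<bar>(a - a') \<bullet> b\<bar> + \<bar>a' \<bullet> (b - b')\<bar>"
    by simp
  also have "\<dots> \<le> norm (a - a') * norm b + norm a' * norm (b - b')"
    by (intro add_mono Cauchy_Schwarz_ineq2)
  finally show ?thesis .
qed

lemma norm_scaleR_diff_le:
  "norm (r *\<^sub>R x - r' *\<^sub>R x') \<le> \<bar>r - r'\<bar> * norm x + \<bar>r'\<bar> * norm (x - x')"
proof -
  have "r *\<^sub>R x - r' *\<^sub>R x' = (r - r') *\<^sub>R x + r' *\<^sub>R (x - x')"
    by (simp add: algebra_simps)
  then show ?thesis
    by (metis norm_scaleR norm_triangle_ineq)
qed

lemma norm_cross3_diff_le: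
  "norm (cross3 a b - cross3 a' b') \<le> norm (a - a') * norm b + norm a' * norm (b - b')"
proof -
  have "cross3 a b - cross3 a' b' = cross3 (a - a') b + cross3 a' (b - b')"
    by (simp add: Cross3.left_diff_distrib Cross3.right_diff_distrib)
  then have "norm (cross3 a b - cross3 a' b') \<le> norm (cross3 (a - a') b) + norm (cross3 a' (b - b'))"
    by (simp add: norm_triangle_ineq)
  also have "\<dots> \<le> norm (a - a') * norm b + norm a' * norm (b - b')"
    by (intro add_mono norm_cross3_le)
  finally show ?thesis .
qed

lemma abs_norm_diff_diff_le:
  fixes a b :: "'a::real_normed_vector"
  shows "\<bar>norm (b - a) - norm (b' - a')\<bar> \<le> norm (a - a') + norm (b - b')"
proof -
  have "\<bar>norm (b - a) - norm (b' - a')\<bar> \<le> norm ((b - b') - (a - a'))"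
    using norm_triangle_ineq3[of "b - a" "b' - a'"] by (simp add: algebra_simps)
  also have "\<dots> \<le> norm (b - b') + norm (a - a')"
    by (rule norm_triangle_ineq4)
  finally show ?thesis
    by simp
qed

lemma norm_rot_core_le:
  assumes "norm a = 1" "norm b = 1" "norm v \<le> K"
  shows "norm (rot_core a b v) \<le> 2 * K"
proof -
  have "norm (rot_core a b v) \<le> norm ((a \<bullet> b) *\<^sub>R v) + norm (cross3 (cross3 a b) v)"
    unfolding rot_core_def by (rule norm_triangle_ineq)
  also have "norm ((a \<bullet> b) *\<^sub>R v) \<le> 1 * K"
    unfolding norm_scaleR using unit_inner_facts(3)[OF assms(1,2)] assms(3) by (intro mult_mono) auto
  also have "norm (cross3 (cross3 a b) v) \<le> norm (cross3 a b) * norm v"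
    by (rule norm_cross3_le)
  also have "\<dots> \<le> 1 * K"
    using norm_cross3_le[of a b] assms by (intro mult_mono) auto
  finally show ?thesis
    by simp
qed

lemma norm_rot_core_diff_le:
  assumes "norm a = 1" "norm b = 1" "norm a' = 1" "norm b' = 1" "norm v \<le> K"
  shows "norm (rot_core a b v - rot_core a' b' v')
    \<le> 2 * K * (norm (a - a') + norm (b - b')) + 2 * norm (v - v')"
proof -
  define e where "e = norm (a - a') + norm (b - b')"
  have e: "0 \<le> e"
    by (simp add: e_def)
  have "norm ((a \<bullet> b) *\<^sub>R v - (a' \<bullet> b') *\<^sub>R v') \<le> e * K + 1 * norm (v - v')"
  proof -
    have "norm ((a \<bullet> b) *\<^sub>R v - (a' \<bullet> b') *\<^sub>R v')
        \<le> \<bar>a \<bullet> b - a' \<bullet> b'\<bar> * norm v + \<bar>a' \<bullet> b'\<bar> * norm (v - v')"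
      by (rule norm_scaleR_diff_le)
    also have "\<dots> \<le> e * K + 1 * norm (v - v')"
      using abs_inner_diff_le[of a b a' b'] unit_inner_facts(3)[of a' b'] assms e
      by (intro add_mono mult_mono) (auto simp: e_def)
    finally show ?thesis .
  qed
  moreover have "norm (cross3 (cross3 a b) v - cross3 (cross3 a' b') v') \<le> e * K + 1 * norm (v - v')"
  proof -
    have "norm (cross3 (cross3 a b) v - cross3 (cross3 a' b') v')
        \<le> norm (cross3 a b - cross3 a' b') * norm v + norm (cross3 a' b') * norm (v - v')"
      by (rule norm_cross3_diff_le)
    also have "\<dots> \<le> e * K + 1 * norm (v - v')"
      using norm_cross3_diff_le[of a b a' b'] norm_cross3_le[of a' b'] assms e
      by (intro add_mono mult_mono) (auto simp: e_def)
    finally show ?thesis .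
  qed
  moreover have "norm (rot_core a b v - rot_core a' b' v')
      \<le> norm ((a \<bullet> b) *\<^sub>R v - (a' \<bullet> b') *\<^sub>R v') + norm (cross3 (cross3 a b) v - cross3 (cross3 a' b') v')"
    unfolding rot_core_def by (rule order_trans[OF _ norm_triangle_ineq]) (simp add: algebra_simps)
  ultimately show ?thesis
    by (simp add: e_def algebra_simps)
qed

definition align :: "(real \<Rightarrow> real) \<Rightarrow> real^3 \<Rightarrow> real^3 \<Rightarrow> real^3 \<Rightarrow> real^3" where
  "align \<psi> a b v = psi_ext \<psi> (norm (b - a)) *\<^sub>R (rotR a b *v v)"

locale lipschitz_kernel =
  fixes \<psi> :: "real \<Rightarrow> real" and Lp :: real
  assumes Lp_nonneg: "0 \<le> Lp"
    and psi_lipschitz: "\<And>x y. x \<in> {0..2} \<Longrightarrow> y \<in> {0..2} \<Longrightarrow> \<bar>\<psi> x - \<psi> y\<bar> \<le> Lp * \<bar>x - y\<bar>"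
    and psi_2: "\<psi> 2 = 0"
begin

lemma abs_psi_le: "d \<in> {0..2} \<Longrightarrow> \<bar>\<psi> d\<bar> \<le> Lp * (2 - d)"
  using psi_lipschitz[of d 2] psi_2 by auto

lemma abs_psi_le_2Lp:
  assumes "d \<in> {0..2}"
  shows "\<bar>\<psi> d\<bar> \<le> 2 * Lp"
proof -
  have "Lp * (2 - d) \<le> Lp * 2"
    using assms Lp_nonneg by (intro mult_left_mono) auto
  then show ?thesis
    using abs_psi_le[OF assms] by linarith
qed

lemma abs_psi_ext_le: "0 \<le> d \<Longrightarrow> \<bar>psi_ext \<psi> d\<bar> \<le> 2 * Lp"
  using abs_psi_le_2Lp[of d] Lp_nonneg by (auto simp: psi_ext_def)

definition align_coeff :: "real^3 \<Rightarrow> real^3 \<Rightarrow> real" where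
  "align_coeff a b = \<psi> (norm (b - a)) / (1 + a \<bullet> b)"

text \<open>The rotation is singular at antipodal points, where 1 + a \<bullet> b = 0; the
  assumption \<psi> 2 = 0 makes the alignment coefficient vanish to first order there.\<close>
lemma align_coeff_props:
  assumes a: "norm a = 1" and b: "norm b = 1"
  shows "align_coeff a b * (1 + a \<bullet> b) = \<psi> (norm (b - a))" and "\<bar>align_coeff a b\<bar> \<le> Lp"
proof -
  define d where "d = norm (b - a)"
  define c where "c = a \<bullet> b"
  have d: "d \<in> {0..2}"
    using norm_diff_unit_le_2[OF a b] by (simp add: d_def)
  have dc: "d\<^sup>2 = 2 - 2 * c"
    using unit_inner_facts(1)[OF a b] by (simp add: d_def c_def)
  have "d * d \<le> 2 * d"
    using d by (intro mult_right_mono) auto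
  then have "2 - d \<le> 1 + c"
    using dc by (simp add: power2_eq_square)
  then have psi: "\<bar>\<psi> d\<bar> \<le> Lp * (1 + c)"
    using abs_psi_le[OF d] Lp_nonneg by (meson mult_left_mono order_trans)
  show "align_coeff a b * (1 + a \<bullet> b) = \<psi> (norm (b - a))"
  proof (cases "1 + c = 0")
    case True
    then have "\<psi> d = 0"
      using psi Lp_nonneg by simp
    then show ?thesis
      using True by (simp add: align_coeff_def d_def c_def)
  next
    case False
    then show ?thesis
      by (simp add: align_coeff_def c_def)
  qed
  show "\<bar>align_coeff a b\<bar> \<le> Lp"
  proof (cases "1 + c = 0")
    case True
    then show ?thesis
      using Lp_nonneg by (simp add: align_coeff_def c_def)
  next
    case False
    then have "0 < 1 + c"
      using psi Lp_nonneg \<open>2 - d \<le> 1 + c\<close> d by auto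
    then show ?thesis
      using psi by (simp add: align_coeff_def d_def c_def abs_divide divide_le_eq)
  qed
qed

lemma align_unit:
  assumes a: "norm a = 1" and b: "norm b = 1"
  shows "align \<psi> a b v
    = \<psi> (norm (b - a)) *\<^sub>R rot_core a b v + (align_coeff a b * (cross3 a b \<bullet> v)) *\<^sub>R cross3 a b"
proof (cases "a = - b")
  case True
  then have "norm (b - a) = 2"
    using b by (simp add: scaleR_2[symmetric])
  then show ?thesis
    using True by (simp add: align_def align_coeff_def rotR_def psi_ext_def psi_2)
next
  case False
  have "norm (b - a) \<le> 2"
    using norm_diff_unit_le_2[OF a b] by simp
  then show ?thesis
    using rotR_mult_vec_unit[OF a b False]
    by (simp add: align_def align_coeff_def psi_ext_def algebra_simps)
qed

lemma align_coeff_diff_le: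
  assumes a: "norm a = 1" and b: "norm b = 1" and a': "norm a' = 1" and b': "norm b' = 1"
  shows "\<bar>align_coeff a b - align_coeff a' b'\<bar> * (1 + a' \<bullet> b') \<le> 2 * Lp * (norm (a - a') + norm (b - b'))"
proof -
  define e where "e = norm (a - a') + norm (b - b')"
  define g where "g = align_coeff a b"
  define g' where "g' = align_coeff a' b'"
  have "\<bar>\<psi> (norm (b - a)) - \<psi> (norm (b' - a'))\<bar> \<le> Lp * \<bar>norm (b - a) - norm (b' - a')\<bar>"
    using norm_diff_unit_le_2 a b a' b' by (intro psi_lipschitz) auto
  also have "\<dots> \<le> Lp * e"
    unfolding e_def by (intro mult_left_mono abs_norm_diff_diff_le Lp_nonneg)
  finally have psi: "\<bar>\<psi> (norm (b - a)) - \<psi> (norm (b' - a'))\<bar> \<le> Lp * e" .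
  have c: "\<bar>a' \<bullet> b' - a \<bullet> b\<bar> \<le> e"
    using abs_inner_diff_le[of a b a' b'] b a' by (simp add: e_def abs_minus_commute)
  have nonneg: "0 \<le> 1 + a' \<bullet> b'"
    using unit_inner_facts(3)[OF a' b'] by simp
  have eq: "(g - g') * (1 + a' \<bullet> b') = (\<psi> (norm (b - a)) - \<psi> (norm (b' - a'))) + g * (a' \<bullet> b' - a \<bullet> b)"
    using align_coeff_props(1)[OF a b] align_coeff_props(1)[OF a' b'] by (simp add: g_def g'_def algebra_simps)
  have "\<bar>g - g'\<bar> * (1 + a' \<bullet> b') = \<bar>(\<psi> (norm (b - a)) - \<psi> (norm (b' - a'))) + g * (a' \<bullet> b' - a \<bullet> b)\<bar>"
    unfolding eq[symmetric] abs_mult using nonneg by simp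
  also have "\<dots> \<le> \<bar>\<psi> (norm (b - a)) - \<psi> (norm (b' - a'))\<bar> + \<bar>g\<bar> * \<bar>a' \<bullet> b' - a \<bullet> b\<bar>"
    by (simp add: abs_mult[symmetric] abs_triangle_ineq)
  also have "\<dots> \<le> Lp * e + Lp * e"
    using psi c align_coeff_props(2)[OF a b] Lp_nonneg by (intro add_mono mult_mono) (auto simp: g_def)
  finally show ?thesis
    by (simp add: g_def g'_def e_def)
qed

lemma axial_term_diff_le:
  assumes a: "norm a = 1" and b: "norm b = 1" and a': "norm a' = 1" and b': "norm b' = 1"
    and v: "norm v \<le> K" and v': "norm v' \<le> K"
  defines "e \<equiv> norm (a - a') + norm (b - b')"
  shows "norm ((align_coeff a b * (cross3 a b \<bullet> v)) *\<^sub>R cross3 a b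
      - (align_coeff a' b' * (cross3 a' b' \<bullet> v')) *\<^sub>R cross3 a' b')
    \<le> Lp * (6 * K * e + norm (v - v'))"
proof -
  define g where "g = align_coeff a b"
  define g' where "g' = align_coeff a' b'"
  define w where "w = cross3 a b"
  define w' where "w' = cross3 a' b'"
  define s where "s = w \<bullet> v"
  define s' where "s' = w' \<bullet> v'"
  have K: "0 \<le> K"
    using v norm_ge_zero order_trans by blast
  have e: "0 \<le> e"
    by (simp add: e_def)
  have w: "norm w \<le> 1" "norm w' \<le> 1" and ww: "norm (w - w') \<le> e"
    using norm_cross3_le[of a b] norm_cross3_le[of a' b'] norm_cross3_diff_le[of a b a' b'] a b a' b'
    by (simp_all add: w_def w'_def e_def)
  have s': "\<bar>s'\<bar> \<le> norm w' * K"
    unfolding s'_def using Cauchy_Schwarz_ineq2[of w' v'] v' by (smt (verit) mult_left_mono norm_ge_zero)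
  have s'K: "\<bar>s'\<bar> \<le> K"
    using s' w K by (meson mult_left_le_one_le norm_ge_zero order_trans)
  have "\<bar>s - s'\<bar> \<le> norm (w - w') * norm v + norm w' * norm (v - v')"
    unfolding s_def s'_def by (rule abs_inner_diff_le)
  also have "\<dots> \<le> e * K + 1 * norm (v - v')"
    using ww v w e by (intro add_mono mult_mono) auto
  finally have ss: "\<bar>s - s'\<bar> \<le> e * K + norm (v - v')"
    by simp
  have "norm (s *\<^sub>R w - s' *\<^sub>R w') \<le> \<bar>s - s'\<bar> * norm w + \<bar>s'\<bar> * norm (w - w')"
    by (rule norm_scaleR_diff_le)
  also have "\<dots> \<le> (e * K + norm (v - v')) * 1 + K * e"
    using ss w ww s'K K by (intro add_mono mult_mono) auto
  finally have "norm (s *\<^sub>R w - s' *\<^sub>R w') \<le> 2 * K * e + norm (v - v')"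
    by simp
  then have first: "norm (g *\<^sub>R (s *\<^sub>R w - s' *\<^sub>R w')) \<le> Lp * (2 * K * e + norm (v - v'))"
    unfolding norm_scaleR using align_coeff_props(2)[OF a b] by (intro mult_mono) (auto simp: g_def)
  have nw': "norm w' * norm w' = (1 - a' \<bullet> b') * (1 + a' \<bullet> b')"
    using norm_cross[of a' b'] a' b' by (simp add: w'_def power2_eq_square algebra_simps)
  have "norm (((g - g') * s') *\<^sub>R w') = \<bar>g - g'\<bar> * \<bar>s'\<bar> * norm w'"
    by (simp add: abs_mult)
  also have "\<dots> \<le> \<bar>g - g'\<bar> * (norm w' * K) * norm w'"
    using s' by (intro mult_right_mono mult_left_mono) auto
  also have "\<dots> = \<bar>g - g'\<bar> * K * (norm w' * norm w')"
    by (simp add: ac_simps)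
  also have "\<dots> = (\<bar>g - g'\<bar> * (1 + a' \<bullet> b')) * (1 - a' \<bullet> b') * K"
    unfolding nw' by (simp add: ac_simps)
  also have "\<dots> \<le> (2 * Lp * e) * 2 * K"
    using align_coeff_diff_le[OF a b a' b'] unit_inner_facts(3)[OF a' b'] K Lp_nonneg e
    by (intro mult_right_mono[OF mult_mono]) (auto simp: g_def g'_def e_def)
  finally have second: "norm (((g - g') * s') *\<^sub>R w') \<le> 4 * K * Lp * e"
    by (simp add: ac_simps)
  have "(g * s) *\<^sub>R w - (g' * s') *\<^sub>R w' = g *\<^sub>R (s *\<^sub>R w - s' *\<^sub>R w') + ((g - g') * s') *\<^sub>R w'"
    by (simp add: algebra_simps)
  then have "norm ((g * s) *\<^sub>R w - (g' * s') *\<^sub>R w')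
      \<le> norm (g *\<^sub>R (s *\<^sub>R w - s' *\<^sub>R w')) + norm (((g - g') * s') *\<^sub>R w')"
    by (metis norm_triangle_ineq)
  also have "\<dots> \<le> Lp * (6 * K * e + norm (v - v'))"
    using first second by (simp add: algebra_simps)
  finally show ?thesis
    by (simp add: g_def g'_def w_def w'_def s_def s'_def)
qed

lemma align_lipschitz:
  assumes a: "norm a = 1" and b: "norm b = 1" and a': "norm a' = 1" and b': "norm b' = 1"
    and v: "norm v \<le> K" and v': "norm v' \<le> K"
  shows "norm (align \<psi> a b v - align \<psi> a' b' v')
    \<le> Lp * (12 * K + 5) * (norm (a - a') + norm (b - b') + norm (v - v'))"
proof -
  define e where "e = norm (a - a') + norm (b - b')"
  define d where "d = norm (b - a)"
  define d' where "d' = norm (b' - a')"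
  have K: "0 \<le> K"
    using v norm_ge_zero order_trans by blast
  have dd: "d \<in> {0..2}" "d' \<in> {0..2}"
    using norm_diff_unit_le_2 a b a' b' by (simp_all add: d_def d'_def)
  have "\<bar>\<psi> d - \<psi> d'\<bar> \<le> Lp * \<bar>d - d'\<bar>"
    using dd by (rule psi_lipschitz)
  also have "\<dots> \<le> Lp * e"
    unfolding d_def d'_def e_def by (intro mult_left_mono abs_norm_diff_diff_le Lp_nonneg)
  finally have psi: "\<bar>\<psi> d - \<psi> d'\<bar> \<le> Lp * e" .
  have "norm (\<psi> d *\<^sub>R rot_core a b v - \<psi> d' *\<^sub>R rot_core a' b' v')
      \<le> \<bar>\<psi> d - \<psi> d'\<bar> * norm (rot_core a b v) + \<bar>\<psi> d'\<bar> * norm (rot_core a b v - rot_core a' b' v')"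
    by (rule norm_scaleR_diff_le)
  also have "\<dots> \<le> (Lp * e) * (2 * K) + (2 * Lp) * (2 * K * e + 2 * norm (v - v'))"
    using psi abs_psi_le_2Lp[OF dd(2)] norm_rot_core_le[OF a b v] norm_rot_core_diff_le[OF a b a' b' v]
    by (intro add_mono mult_mono) (auto simp: e_def)
  finally have first: "norm (\<psi> d *\<^sub>R rot_core a b v - \<psi> d' *\<^sub>R rot_core a' b' v')
      \<le> Lp * (6 * K * e + 4 * norm (v - v'))"
    by (simp add: algebra_simps)
  have "norm (align \<psi> a b v - align \<psi> a' b' v')
      \<le> norm (\<psi> d *\<^sub>R rot_core a b v - \<psi> d' *\<^sub>R rot_core a' b' v')
        + norm ((align_coeff a b * (cross3 a b \<bullet> v)) *\<^sub>R cross3 a b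
          - (align_coeff a' b' * (cross3 a' b' \<bullet> v')) *\<^sub>R cross3 a' b')"
    unfolding align_unit[OF a b] align_unit[OF a' b'] d_def d'_def
    by (rule order_trans[OF _ norm_triangle_ineq]) (simp add: algebra_simps)
  also have "\<dots> \<le> Lp * (6 * K * e + 4 * norm (v - v')) + Lp * (6 * K * e + norm (v - v'))"
    using first axial_term_diff_le[OF a b a' b' v v'] by (simp add: e_def)
  also have "\<dots> \<le> Lp * (12 * K + 5) * (e + norm (v - v'))"
    using Lp_nonneg K by (simp add: algebra_simps mult_nonneg_nonneg e_def)
  finally show ?thesis
    by (simp add: e_def add.assoc)
qed

end

definition coupling :: "nat \<Rightarrow> (real \<Rightarrow> real) \<Rightarrow> real \<Rightarrow> (nat \<Rightarrow> (real^3) \<times> (real^3)) \<Rightarrow> nat \<Rightarrow> real^3" where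
  "coupling N \<psi> \<sigma> Y i =
     (\<Sum>j<N. (psi_ext \<psi> (norm (fst (Y i) - fst (Y j))) / real N) *\<^sub>R
                 (rotR (fst (Y j)) (fst (Y i)) *v snd (Y j) - snd (Y i)))
     + (\<Sum>k<N. (\<sigma> / real N) *\<^sub>R
                 ((norm (fst (Y i)))\<^sup>2 *\<^sub>R fst (Y k) - (fst (Y i) \<bullet> fst (Y k)) *\<^sub>R fst (Y i)))"

lemma accel_eq_coupling:
  "accel N \<psi> \<sigma> x v i t
    = - ((norm (v i t))\<^sup>2 / (norm (x i t))\<^sup>2) *\<^sub>R x i t + coupling N \<psi> \<sigma> (\<lambda>j. (x j t, v j t)) i"
  by (simp add: accel_def coupling_def)

definition sphere_states :: "nat \<Rightarrow> real \<Rightarrow> (nat \<Rightarrow> (real^3) \<times> (real^3)) set" where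
  "sphere_states N K = {Y. \<forall>i<N. norm (fst (Y i)) = 1 \<and> norm (snd (Y i)) \<le> K}"

lemma norm_fst_diff_le: "norm (fst a - fst b) \<le> norm (a - b)"
  using dist_fst_le[of a b] by (simp add: dist_norm)

lemma norm_snd_diff_le: "norm (snd a - snd b) \<le> norm (a - b)"
  using dist_snd_le[of a b] by (simp add: dist_norm)

lemma norm_mean_diff_le:
  fixes f g :: "nat \<Rightarrow> 'a::real_normed_vector" and Y Y' :: "nat \<Rightarrow> 'b::real_normed_vector"
  assumes i: "i < N" and C: "0 \<le> C"
    and fg: "\<And>j. j < N \<Longrightarrow> norm (f j - g j) \<le> C * (norm (Y i - Y' i) + norm (Y j - Y' j))"
  shows "norm ((\<Sum>j<N. (1 / real N) *\<^sub>R f j) - (\<Sum>j<N. (1 / real N) *\<^sub>R g j)) \<le> 2 * C * dist_sum N Y Y'"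
proof -
  have "norm ((\<Sum>j<N. (1 / real N) *\<^sub>R f j) - (\<Sum>j<N. (1 / real N) *\<^sub>R g j))
      \<le> (\<Sum>j<N. (1 / real N) * norm (f j - g j))"
    by (simp add: sum_subtractf[symmetric] scaleR_diff_right[symmetric] order_trans[OF norm_sum])
  also have "\<dots> \<le> (\<Sum>j<N. (1 / real N) * (C * (norm (Y i - Y' i) + norm (Y j - Y' j))))"
    using fg by (intro sum_mono mult_left_mono) auto
  also have "\<dots> = C * norm (Y i - Y' i) + C / real N * dist_sum N Y Y'"
    using i by (simp add: dist_sum_def sum.distrib sum_distrib_left algebra_simps)
  also have "\<dots> \<le> C * dist_sum N Y Y' + C * dist_sum N Y Y'"
  proof (intro add_mono mult_left_mono mult_right_mono)
    show "C / real N \<le> C"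
      using i C by (auto simp: divide_le_eq mult_le_cancel_left1)
  qed (use C norm_le_dist_sum[OF i, of Y Y'] dist_sum_nonneg[of N Y Y'] in auto)
  finally show ?thesis
    by simp
qed

lemma cohesion_term_diff_le:
  fixes a b :: "'a::real_inner"
  assumes "norm a = 1" "norm b = 1" "norm a' = 1" "norm b' = 1"
  shows "norm ((b - (a \<bullet> b) *\<^sub>R a) - (b' - (a' \<bullet> b') *\<^sub>R a')) \<le> 2 * (norm (a - a') + norm (b - b'))"
proof -
  have "norm ((a \<bullet> b) *\<^sub>R a - (a' \<bullet> b') *\<^sub>R a') \<le> \<bar>a \<bullet> b - a' \<bullet> b'\<bar> * norm a + \<bar>a' \<bullet> b'\<bar> * norm (a - a')"
    by (rule norm_scaleR_diff_le)
  also have "\<dots> \<le> (norm (a - a') + norm (b - b')) * 1 + 1 * norm (a - a')"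
    using abs_inner_diff_le[of a b a' b'] unit_inner_facts(3)[of a' b'] assms
    by (intro add_mono mult_mono) auto
  finally have "norm ((a \<bullet> b) *\<^sub>R a - (a' \<bullet> b') *\<^sub>R a') \<le> 2 * norm (a - a') + norm (b - b')"
    by simp
  moreover have "norm ((b - (a \<bullet> b) *\<^sub>R a) - (b' - (a' \<bullet> b') *\<^sub>R a'))
      \<le> norm (b - b') + norm ((a \<bullet> b) *\<^sub>R a - (a' \<bullet> b') *\<^sub>R a')"
    by (rule order_trans[OF _ norm_triangle_ineq4]) (simp add: algebra_simps)
  ultimately show ?thesis
    by simp
qed

context lipschitz_kernel
begin

lemma coupling_sphere_states:
  assumes Y: "Y \<in> sphere_states N K" and i: "i < N"
  shows "coupling N \<psi> \<sigma> Y i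
    = (\<Sum>j<N. (1 / real N) *\<^sub>R
        (align \<psi> (fst (Y j)) (fst (Y i)) (snd (Y j)) - \<psi> (norm (fst (Y i) - fst (Y j))) *\<^sub>R snd (Y i)))
      + (\<Sum>k<N. (1 / real N) *\<^sub>R (\<sigma> *\<^sub>R (fst (Y k) - (fst (Y i) \<bullet> fst (Y k)) *\<^sub>R fst (Y i))))"
proof -
  have unit: "norm (fst (Y j)) = 1" if "j < N" for j
    using Y that by (auto simp: sphere_states_def)
  have "psi_ext \<psi> (norm (fst (Y i) - fst (Y j))) = \<psi> (norm (fst (Y i) - fst (Y j)))" if "j < N" for j
    using norm_diff_unit_le_2[OF unit[OF that] unit[OF i]] by (simp add: psi_ext_def)
  then show ?thesis
    unfolding coupling_def using unit[OF i]
    by (intro arg_cong2[where f = "(+)"] sum.cong) (auto simp: align_def algebra_simps)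
qed

lemma alignment_term_diff_le:
  assumes Y: "Y \<in> sphere_states N K" and Y': "Y' \<in> sphere_states N K" and i: "i < N" and j: "j < N"
  shows "norm (align \<psi> (fst (Y j)) (fst (Y i)) (snd (Y j)) - \<psi> (norm (fst (Y i) - fst (Y j))) *\<^sub>R snd (Y i)
     - (align \<psi> (fst (Y' j)) (fst (Y' i)) (snd (Y' j)) - \<psi> (norm (fst (Y' i) - fst (Y' j))) *\<^sub>R snd (Y' i)))
    \<le> 2 * Lp * (13 * K + 7) * (norm (Y i - Y' i) + norm (Y j - Y' j))"
proof -
  define di where "di = norm (Y i - Y' i)"
  define dj where "dj = norm (Y j - Y' j)"
  have u: "norm (fst (Y i)) = 1" "norm (fst (Y j)) = 1" "norm (fst (Y' i)) = 1" "norm (fst (Y' j)) = 1"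
    and vb: "norm (snd (Y i)) \<le> K" "norm (snd (Y j)) \<le> K" "norm (snd (Y' i)) \<le> K" "norm (snd (Y' j)) \<le> K"
    using Y Y' i j by (auto simp: sphere_states_def)
  have K: "0 \<le> K"
    using vb(1) norm_ge_zero order_trans by blast
  have fi: "norm (fst (Y i) - fst (Y' i)) \<le> di" and fj: "norm (fst (Y j) - fst (Y' j)) \<le> dj"
    and si: "norm (snd (Y i) - snd (Y' i)) \<le> di" and sj: "norm (snd (Y j) - snd (Y' j)) \<le> dj"
    by (simp_all add: di_def dj_def norm_fst_diff_le norm_snd_diff_le)
  have "norm (align \<psi> (fst (Y j)) (fst (Y i)) (snd (Y j)) - align \<psi> (fst (Y' j)) (fst (Y' i)) (snd (Y' j)))
      \<le> Lp * (12 * K + 5) * (norm (fst (Y j) - fst (Y' j)) + norm (fst (Y i) - fst (Y' i))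
          + norm (snd (Y j) - snd (Y' j)))"
    by (rule align_lipschitz[OF u(2) u(1) u(4) u(3) vb(2) vb(4)])
  also have "\<dots> \<le> Lp * (12 * K + 5) * (2 * dj + di)"
    using fi fj sj Lp_nonneg K by (intro mult_left_mono) auto
  finally have A: "norm (align \<psi> (fst (Y j)) (fst (Y i)) (snd (Y j)) - align \<psi> (fst (Y' j)) (fst (Y' i)) (snd (Y' j)))
      \<le> Lp * (12 * K + 5) * (2 * dj + di)" .
  have dI: "norm (fst (Y i) - fst (Y j)) \<in> {0..2}" "norm (fst (Y' i) - fst (Y' j)) \<in> {0..2}"
    using norm_diff_unit_le_2 u by auto
  have "\<bar>\<psi> (norm (fst (Y i) - fst (Y j))) - \<psi> (norm (fst (Y' i) - fst (Y' j)))\<bar>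
      \<le> Lp * \<bar>norm (fst (Y i) - fst (Y j)) - norm (fst (Y' i) - fst (Y' j))\<bar>"
    by (rule psi_lipschitz[OF dI])
  also have "\<dots> \<le> Lp * (dj + di)"
    using abs_norm_diff_diff_le[where a = "fst (Y j)" and b = "fst (Y i)" and a' = "fst (Y' j)" and b' = "fst (Y' i)"] fi fj Lp_nonneg
    by (intro mult_left_mono) auto
  finally have psi: "\<bar>\<psi> (norm (fst (Y i) - fst (Y j))) - \<psi> (norm (fst (Y' i) - fst (Y' j)))\<bar> \<le> Lp * (dj + di)" .
  have "norm (\<psi> (norm (fst (Y i) - fst (Y j))) *\<^sub>R snd (Y i) - \<psi> (norm (fst (Y' i) - fst (Y' j))) *\<^sub>R snd (Y' i))
      \<le> \<bar>\<psi> (norm (fst (Y i) - fst (Y j))) - \<psi> (norm (fst (Y' i) - fst (Y' j)))\<bar> * norm (snd (Y i))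
        + \<bar>\<psi> (norm (fst (Y' i) - fst (Y' j)))\<bar> * norm (snd (Y i) - snd (Y' i))"
    by (rule norm_scaleR_diff_le)
  also have "\<dots> \<le> (Lp * (dj + di)) * K + (2 * Lp) * di"
    using psi abs_psi_le_2Lp[OF dI(2)] vb si Lp_nonneg
    by (intro add_mono mult_mono) (auto simp: di_def dj_def)
  finally have B: "norm (\<psi> (norm (fst (Y i) - fst (Y j))) *\<^sub>R snd (Y i)
      - \<psi> (norm (fst (Y' i) - fst (Y' j))) *\<^sub>R snd (Y' i)) \<le> (Lp * (dj + di)) * K + (2 * Lp) * di" .
  have "norm (align \<psi> (fst (Y j)) (fst (Y i)) (snd (Y j)) - \<psi> (norm (fst (Y i) - fst (Y j))) *\<^sub>R snd (Y i)
     - (align \<psi> (fst (Y' j)) (fst (Y' i)) (snd (Y' j)) - \<psi> (norm (fst (Y' i) - fst (Y' j))) *\<^sub>R snd (Y' i)))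
     \<le> norm (align \<psi> (fst (Y j)) (fst (Y i)) (snd (Y j)) - align \<psi> (fst (Y' j)) (fst (Y' i)) (snd (Y' j)))
       + norm (\<psi> (norm (fst (Y i) - fst (Y j))) *\<^sub>R snd (Y i) - \<psi> (norm (fst (Y' i) - fst (Y' j))) *\<^sub>R snd (Y' i))"
    by (rule order_trans[OF _ norm_triangle_ineq4]) (simp add: algebra_simps)
  also have "\<dots> \<le> Lp * (12 * K + 5) * (2 * dj + di) + ((Lp * (dj + di)) * K + (2 * Lp) * di)"
    using A B by (rule add_mono)
  also have "\<dots> \<le> 2 * Lp * (13 * K + 7) * (di + dj)"
  proof -
    have "0 \<le> Lp * K * dj" "0 \<le> Lp * dj" "0 \<le> Lp * K * di" "0 \<le> Lp * di"
      using Lp_nonneg K by (simp_all add: di_def dj_def)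
    then show ?thesis
      by (simp add: algebra_simps)
  qed
  finally show ?thesis
    by (simp add: di_def dj_def)
qed

lemma coupling_lipschitz:
  assumes Y: "Y \<in> sphere_states N K" and Y': "Y' \<in> sphere_states N K" and i: "i < N" and \<sigma>: "0 \<le> \<sigma>"
  shows "norm (coupling N \<psi> \<sigma> Y i - coupling N \<psi> \<sigma> Y' i) \<le> (4 * Lp * (13 * K + 7) + 4 * \<sigma>) * dist_sum N Y Y'"
proof -
  have K: "0 \<le> K"
    using Y i by (auto simp: sphere_states_def intro: order_trans[OF norm_ge_zero])
  have unit: "norm (fst (Z j)) = 1" if "Z \<in> sphere_states N K" "j < N" for Z j
    using that by (auto simp: sphere_states_def)
  have align: "norm ((\<Sum>j<N. (1 / real N) *\<^sub>R
        (align \<psi> (fst (Y j)) (fst (Y i)) (snd (Y j)) - \<psi> (norm (fst (Y i) - fst (Y j))) *\<^sub>R snd (Y i)))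
      - (\<Sum>j<N. (1 / real N) *\<^sub>R
        (align \<psi> (fst (Y' j)) (fst (Y' i)) (snd (Y' j)) - \<psi> (norm (fst (Y' i) - fst (Y' j))) *\<^sub>R snd (Y' i))))
    \<le> 2 * (2 * Lp * (13 * K + 7)) * dist_sum N Y Y'"
    using alignment_term_diff_le[OF Y Y' i] Lp_nonneg K by (intro norm_mean_diff_le[OF i]) auto
  have "norm (\<sigma> *\<^sub>R (fst (Y k) - (fst (Y i) \<bullet> fst (Y k)) *\<^sub>R fst (Y i))
      - \<sigma> *\<^sub>R (fst (Y' k) - (fst (Y' i) \<bullet> fst (Y' k)) *\<^sub>R fst (Y' i)))
    \<le> 2 * \<sigma> * (norm (Y i - Y' i) + norm (Y k - Y' k))" if k: "k < N" for k
  proof -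
    have "norm ((fst (Y k) - (fst (Y i) \<bullet> fst (Y k)) *\<^sub>R fst (Y i))
        - (fst (Y' k) - (fst (Y' i) \<bullet> fst (Y' k)) *\<^sub>R fst (Y' i)))
      \<le> 2 * (norm (fst (Y i) - fst (Y' i)) + norm (fst (Y k) - fst (Y' k)))"
      using unit Y Y' i k by (intro cohesion_term_diff_le) auto
    also have "\<dots> \<le> 2 * (norm (Y i - Y' i) + norm (Y k - Y' k))"
      by (intro mult_left_mono add_mono norm_fst_diff_le) simp
    finally have "norm ((fst (Y k) - (fst (Y i) \<bullet> fst (Y k)) *\<^sub>R fst (Y i))
        - (fst (Y' k) - (fst (Y' i) \<bullet> fst (Y' k)) *\<^sub>R fst (Y' i)))
      \<le> 2 * (norm (Y i - Y' i) + norm (Y k - Y' k))" .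
    then have "\<sigma> * norm ((fst (Y k) - (fst (Y i) \<bullet> fst (Y k)) *\<^sub>R fst (Y i))
        - (fst (Y' k) - (fst (Y' i) \<bullet> fst (Y' k)) *\<^sub>R fst (Y' i)))
      \<le> \<sigma> * (2 * (norm (Y i - Y' i) + norm (Y k - Y' k)))"
      using \<sigma> by (rule mult_left_mono)
    then show ?thesis
      using \<sigma> by (simp add: scaleR_diff_right[symmetric] ac_simps)
  qed
  then have cohesion: "norm ((\<Sum>k<N. (1 / real N) *\<^sub>R (\<sigma> *\<^sub>R (fst (Y k) - (fst (Y i) \<bullet> fst (Y k)) *\<^sub>R fst (Y i))))
      - (\<Sum>k<N. (1 / real N) *\<^sub>R (\<sigma> *\<^sub>R (fst (Y' k) - (fst (Y' i) \<bullet> fst (Y' k)) *\<^sub>R fst (Y' i)))))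
    \<le> 2 * (2 * \<sigma>) * dist_sum N Y Y'"
    using \<sigma> by (intro norm_mean_diff_le[OF i]) auto
  show ?thesis
    unfolding coupling_sphere_states[OF Y i] coupling_sphere_states[OF Y' i]
    using order_trans[OF norm_triangle_ineq add_mono[OF align cohesion]]
    by (simp add: algebra_simps)
qed

end

definition mcshane_ext ::
  "nat \<Rightarrow> (nat \<Rightarrow> 'a::real_normed_vector) set \<Rightarrow> real \<Rightarrow> ((nat \<Rightarrow> 'a) \<Rightarrow> real^'n) \<Rightarrow> (nat \<Rightarrow> 'a) \<Rightarrow> real^'n"
  where "mcshane_ext N A L f Y = (\<chi> k. Inf ((\<lambda>Y'. f Y' $ k + L * dist_sum N Y Y') ` A))"

context
  fixes N :: nat and A :: "(nat \<Rightarrow> 'a::real_normed_vector) set" and L :: real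
    and f :: "(nat \<Rightarrow> 'a) \<Rightarrow> real^'n"
  assumes A: "A \<noteq> {}" and L: "0 \<le> L"
    and lipschitz: "\<And>Y Y'. Y \<in> A \<Longrightarrow> Y' \<in> A \<Longrightarrow> norm (f Y - f Y') \<le> L * dist_sum N Y Y'"
begin

private lemma component_lipschitz: "Y \<in> A \<Longrightarrow> Y' \<in> A \<Longrightarrow> \<bar>f Y $ k - f Y' $ k\<bar> \<le> L * dist_sum N Y Y'"
  using component_le_norm_cart[of "f Y - f Y'" k] lipschitz[of Y Y'] by simp

private lemma bdd_below_image: "bdd_below ((\<lambda>Y'. f Y' $ k + L * dist_sum N Y Y') ` A)"
proof -
  obtain Y0 where Y0: "Y0 \<in> A"
    using A by auto
  show ?thesis
  proof (rule bdd_belowI2)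
    fix Y' assume Y': "Y' \<in> A"
    have "f Y0 $ k - f Y' $ k \<le> L * (dist_sum N Y0 Y + dist_sum N Y Y')"
      using component_lipschitz[OF Y0 Y', of k] dist_sum_triangle[of N Y0 Y' Y] L
      by (smt (verit) mult_left_mono)
    then show "f Y0 $ k - L * dist_sum N Y0 Y \<le> f Y' $ k + L * dist_sum N Y Y'"
      by (simp add: algebra_simps)
  qed
qed

lemma mcshane_ext_eq: "Y \<in> A \<Longrightarrow> mcshane_ext N A L f Y = f Y"
proof (subst vec_eq_iff, intro allI antisym)
  fix k assume Y: "Y \<in> A"
  show "mcshane_ext N A L f Y $ k \<le> f Y $ k"
    using cInf_lower[OF imageI[OF Y] bdd_below_image[where k = k and Y = Y]] by (simp add: mcshane_ext_def)
  show "f Y $ k \<le> mcshane_ext N A L f Y $ k"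
    unfolding mcshane_ext_def using A component_lipschitz[OF Y]
    by (auto intro!: cInf_greatest simp: abs_le_iff algebra_simps)
qed

lemma mcshane_ext_lipschitz:
  "norm (mcshane_ext N A L f Y - mcshane_ext N A L f Y') \<le> CARD('n) * L * dist_sum N Y Y'"
proof -
  have half: "mcshane_ext N A L f Y $ k - L * dist_sum N Y Y' \<le> mcshane_ext N A L f Y' $ k" for k Y Y' 
    unfolding mcshane_ext_def vec_lambda_beta
  proof (rule cInf_greatest)
    fix z assume "z \<in> (\<lambda>Y''. f Y'' $ k + L * dist_sum N Y' Y'') ` A"
    then obtain Y'' where Y'': "Y'' \<in> A" and z: "z = f Y'' $ k + L * dist_sum N Y' Y''"
      by auto
    have "Inf ((\<lambda>Y''. f Y'' $ k + L * dist_sum N Y Y'') ` A) \<le> f Y'' $ k + L * dist_sum N Y Y''"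
      using cInf_lower[OF imageI[OF Y''] bdd_below_image] .
    also have "\<dots> \<le> z + L * dist_sum N Y Y'"
      using dist_sum_triangle[of N Y Y'' Y'] L z by (simp add: mult_left_mono distrib_left[symmetric])
    finally show "Inf ((\<lambda>Y''. f Y'' $ k + L * dist_sum N Y Y'') ` A) - L * dist_sum N Y Y' \<le> z"
      by simp
  qed (use A in auto)
  have "norm (mcshane_ext N A L f Y - mcshane_ext N A L f Y')
      \<le> (\<Sum>k\<in>UNIV. \<bar>(mcshane_ext N A L f Y - mcshane_ext N A L f Y') $ k\<bar>)"
    by (rule norm_le_l1_cart)
  also have "\<dots> \<le> (\<Sum>k\<in>(UNIV::'n set). L * dist_sum N Y Y')"
  proof (rule sum_mono)
    fix k
    show "\<bar>(mcshane_ext N A L f Y - mcshane_ext N A L f Y') $ k\<bar> \<le> L * dist_sum N Y Y'"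
      using half[where k = k and Y = Y and Y' = Y'] half[where k = k and Y = Y' and Y' = Y]
      by (simp add: dist_sum_commute[of N Y'] abs_le_iff)
  qed
  finally show ?thesis
    by simp
qed

end

definition lipschitz_bounded ::
  "nat \<Rightarrow> (nat \<Rightarrow> 'a::real_normed_vector) set \<Rightarrow> ((nat \<Rightarrow> 'a) \<Rightarrow> 'b::real_normed_vector) \<Rightarrow> bool"
  where "lipschitz_bounded N U f \<longleftrightarrow>
    (\<exists>L\<ge>0. \<forall>Y\<in>U. \<forall>Y'\<in>U. norm (f Y - f Y') \<le> L * dist_sum N Y Y') \<and> (\<exists>B. \<forall>Y\<in>U. norm (f Y) \<le> B)"

lemma lipschitz_boundedI:
  assumes "0 \<le> L" "\<And>Y Y'. Y \<in> U \<Longrightarrow> Y' \<in> U \<Longrightarrow> norm (f Y - f Y') \<le> L * dist_sum N Y Y'"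
    and "\<And>Y. Y \<in> U \<Longrightarrow> norm (f Y) \<le> B"
  shows "lipschitz_bounded N U f"
  using assms unfolding lipschitz_bounded_def by blast

lemma lipschitz_boundedE:
  assumes "lipschitz_bounded N U f"
  obtains L B where "0 \<le> L" "0 \<le> B"
    "\<And>Y Y'. Y \<in> U \<Longrightarrow> Y' \<in> U \<Longrightarrow> norm (f Y - f Y') \<le> L * dist_sum N Y Y'"
    "\<And>Y. Y \<in> U \<Longrightarrow> norm (f Y) \<le> B"
proof -
  obtain L B where L: "0 \<le> L" "\<And>Y Y'. Y \<in> U \<Longrightarrow> Y' \<in> U \<Longrightarrow> norm (f Y - f Y') \<le> L * dist_sum N Y Y'"
    and B: "\<And>Y. Y \<in> U \<Longrightarrow> norm (f Y) \<le> B"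
    using assms unfolding lipschitz_bounded_def by blast
  show ?thesis
  proof (rule that[of L "max B 0"])
    fix Y assume "Y \<in> U"
    then show "norm (f Y) \<le> max B 0"
      using B by (simp add: le_max_iff_disj)
  qed (use L in auto)
qed

lemma lipschitz_bounded_add:
  assumes "lipschitz_bounded N U f" "lipschitz_bounded N U g"
  shows "lipschitz_bounded N U (\<lambda>Y. f Y + g Y)"
proof -
  obtain L1 B1 where f: "0 \<le> L1" "0 \<le> B1"
    "\<And>Y Y'. Y \<in> U \<Longrightarrow> Y' \<in> U \<Longrightarrow> norm (f Y - f Y') \<le> L1 * dist_sum N Y Y'"
    "\<And>Y. Y \<in> U \<Longrightarrow> norm (f Y) \<le> B1"
    using lipschitz_boundedE[OF assms(1)] by blast
  obtain L2 B2 where g: "0 \<le> L2" "0 \<le> B2"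
    "\<And>Y Y'. Y \<in> U \<Longrightarrow> Y' \<in> U \<Longrightarrow> norm (g Y - g Y') \<le> L2 * dist_sum N Y Y'"
    "\<And>Y. Y \<in> U \<Longrightarrow> norm (g Y) \<le> B2"
    using lipschitz_boundedE[OF assms(2)] by blast
  show ?thesis
  proof (rule lipschitz_boundedI[where L = "L1 + L2" and B = "B1 + B2"])
    fix Y Y' assume "Y \<in> U" "Y' \<in> U"
    have "norm (f Y + g Y - (f Y' + g Y')) \<le> norm (f Y - f Y') + norm (g Y - g Y')"
      using norm_triangle_ineq[of "f Y - f Y'" "g Y - g Y'"] by (simp add: algebra_simps)
    also have "\<dots> \<le> L1 * dist_sum N Y Y' + L2 * dist_sum N Y Y'"
      using f g \<open>Y \<in> U\<close> \<open>Y' \<in> U\<close> by (intro add_mono) auto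
    finally show "norm (f Y + g Y - (f Y' + g Y')) \<le> (L1 + L2) * dist_sum N Y Y'"
      by (simp add: distrib_right)
  next
    fix Y assume "Y \<in> U"
    then show "norm (f Y + g Y) \<le> B1 + B2"
      using f g by (intro order_trans[OF norm_triangle_ineq add_mono]) auto
  qed (use f g in simp)
qed

lemma lipschitz_bounded_uminus:
  assumes "lipschitz_bounded N U f"
  shows "lipschitz_bounded N U (\<lambda>Y. - f Y)"
proof -
  have "norm (- a - - b) = norm (a - b)" for a b :: 'b
    by (metis minus_diff_minus norm_minus_cancel)
  then show ?thesis
    using assms unfolding lipschitz_bounded_def norm_minus_cancel by simp
qed

lemma lipschitz_bounded_diff:
  "lipschitz_bounded N U f \<Longrightarrow> lipschitz_bounded N U g \<Longrightarrow> lipschitz_bounded N U (\<lambda>Y. f Y - g Y)"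
  using lipschitz_bounded_add[of N U f "\<lambda>Y. - g Y"] lipschitz_bounded_uminus[of N U g] by simp

lemma lipschitz_bounded_bilinear:
  assumes bil: "bounded_bilinear bil"
    and "lipschitz_bounded N U f" "lipschitz_bounded N U g"
  shows "lipschitz_bounded N U (\<lambda>Y. bil (f Y) (g Y))"
proof -
  obtain K where K: "0 \<le> K" "\<And>a b. norm (bil a b) \<le> norm a * norm b * K"
    using bounded_bilinear.nonneg_bounded[OF bil] by blast
  obtain L1 B1 where f: "0 \<le> L1" "0 \<le> B1"
    "\<And>Y Y'. Y \<in> U \<Longrightarrow> Y' \<in> U \<Longrightarrow> norm (f Y - f Y') \<le> L1 * dist_sum N Y Y'"
    "\<And>Y. Y \<in> U \<Longrightarrow> norm (f Y) \<le> B1"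
    using lipschitz_boundedE[OF assms(2)] by blast
  obtain L2 B2 where g: "0 \<le> L2" "0 \<le> B2"
    "\<And>Y Y'. Y \<in> U \<Longrightarrow> Y' \<in> U \<Longrightarrow> norm (g Y - g Y') \<le> L2 * dist_sum N Y Y'"
    "\<And>Y. Y \<in> U \<Longrightarrow> norm (g Y) \<le> B2"
    using lipschitz_boundedE[OF assms(3)] by blast
  show ?thesis
  proof (rule lipschitz_boundedI[where L = "(L1 * B2 + B1 * L2) * K" and B = "B1 * B2 * K"])
    fix Y Y' assume Y: "Y \<in> U" and Y': "Y' \<in> U"
    have "bil (f Y) (g Y) - bil (f Y') (g Y') = bil (f Y - f Y') (g Y) + bil (f Y') (g Y - g Y')"
      by (simp add: bounded_bilinear.diff_left[OF bil] bounded_bilinear.diff_right[OF bil])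
    then have "norm (bil (f Y) (g Y) - bil (f Y') (g Y'))
        \<le> norm (bil (f Y - f Y') (g Y)) + norm (bil (f Y') (g Y - g Y'))"
      by (simp add: norm_triangle_ineq)
    also have "\<dots> \<le> norm (f Y - f Y') * norm (g Y) * K + norm (f Y') * norm (g Y - g Y') * K"
      by (intro add_mono K(2))
    also have "\<dots> \<le> (L1 * dist_sum N Y Y') * B2 * K + B1 * (L2 * dist_sum N Y Y') * K"
      using f g Y Y' K dist_sum_nonneg[of N Y Y']
      by (intro add_mono mult_right_mono mult_mono) auto
    finally show "norm (bil (f Y) (g Y) - bil (f Y') (g Y')) \<le> (L1 * B2 + B1 * L2) * K * dist_sum N Y Y'"
      by (simp add: algebra_simps)
  next
    fix Y assume "Y \<in> U"
    then show "norm (bil (f Y) (g Y)) \<le> B1 * B2 * K"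
      using f g K by (meson mult_mono mult_right_mono norm_ge_zero order_trans)
  qed (use f g K in simp)
qed

lemma lipschitz_bounded_inverse:
  fixes f :: "(nat \<Rightarrow> 'a::real_normed_vector) \<Rightarrow> real"
  assumes "lipschitz_bounded N U f" and m: "0 < m" and fm: "\<And>Y. Y \<in> U \<Longrightarrow> m \<le> f Y"
  shows "lipschitz_bounded N U (\<lambda>Y. 1 / f Y)"
proof -
  obtain L B where L: "0 \<le> L" "\<And>Y Y'. Y \<in> U \<Longrightarrow> Y' \<in> U \<Longrightarrow> norm (f Y - f Y') \<le> L * dist_sum N Y Y'"
    using assms(1) by (elim lipschitz_boundedE) blast
  show ?thesis
  proof (rule lipschitz_boundedI[where L = "L / m\<^sup>2" and B = "1 / m"])
    fix Y Y' assume Y: "Y \<in> U" and Y': "Y' \<in> U"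
    have pos: "0 < f Y" "0 < f Y'"
      using fm[OF Y] fm[OF Y'] m by auto
    have "norm (1 / f Y - 1 / f Y') = \<bar>f Y' - f Y\<bar> / (f Y * f Y')"
      using pos by (simp add: field_simps abs_divide abs_mult)
    also have "\<dots> \<le> \<bar>f Y' - f Y\<bar> / (m * m)"
      using pos fm[OF Y] fm[OF Y'] m by (intro divide_left_mono mult_mono) auto
    also have "\<dots> \<le> (L * dist_sum N Y Y') / (m * m)"
      using L(2)[OF Y Y'] by (intro divide_right_mono) (auto simp: abs_minus_commute)
    finally show "norm (1 / f Y - 1 / f Y') \<le> L / m\<^sup>2 * dist_sum N Y Y'"
      by (simp add: power2_eq_square)
  next
    fix Y assume "Y \<in> U"
    then have "m \<le> \<bar>f Y\<bar>"
      using fm by force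
    then show "norm (1 / f Y) \<le> 1 / m"
      using m by (simp add: divide_left_mono)
  qed (use L m in simp)
qed

definition shell_states :: "nat \<Rightarrow> real \<Rightarrow> (nat \<Rightarrow> (real^3) \<times> (real^3)) set" where
  "shell_states N K = {Y. \<forall>i<N. 1/2 \<le> norm (fst (Y i)) \<and> norm (fst (Y i)) \<le> 2 \<and> norm (snd (Y i)) \<le> K}"

lemma sphere_states_subset_shell_states: "sphere_states N K \<subseteq> shell_states N K"
  by (auto simp: sphere_states_def shell_states_def)

definition rest_state :: "nat \<Rightarrow> (real^3) \<times> (real^3)" where
  "rest_state = (\<lambda>j. (axis 1 1, 0))"

lemma rest_state_in_sphere_states: "0 \<le> K \<Longrightarrow> rest_state \<in> sphere_states N K"
  by (simp add: rest_state_def sphere_states_def)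

lemma coupling_rest_state [simp]: "coupling N \<psi> \<sigma> rest_state i = 0"
  by (simp add: coupling_def rest_state_def rotR_def)

lemma dist_sum_rest_state_le:
  assumes "Y \<in> shell_states N K"
  shows "dist_sum N Y rest_state \<le> N * (K + 3)"
proof -
  have "norm (Y j - rest_state j) \<le> K + 3" if "j < N" for j
  proof -
    have "norm (Y j - rest_state j) \<le> norm (fst (Y j)) + norm (snd (Y j)) + norm (rest_state j)"
      using norm_triangle_ineq4[of "Y j" "rest_state j"] norm_Pair_le[of "fst (Y j)" "snd (Y j)"] by simp
    also have "norm (rest_state j) = 1"
      by (simp add: rest_state_def norm_Pair)
    finally show ?thesis
      using assms that by (auto simp: shell_states_def)
  qed
  then have "dist_sum N Y rest_state \<le> (\<Sum>j<N. K + 3)"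
    unfolding dist_sum_def by (intro sum_mono) auto
  then show ?thesis
    by simp
qed

lemma lipschitz_bounded_fst: "i < N \<Longrightarrow> lipschitz_bounded N (shell_states N K) (\<lambda>Y. fst (Y i))"
  by (rule lipschitz_boundedI[where L = 1 and B = 2])
    (auto simp: shell_states_def intro: order_trans[OF norm_fst_diff_le norm_le_dist_sum])

lemma lipschitz_bounded_snd: "i < N \<Longrightarrow> lipschitz_bounded N (shell_states N K) (\<lambda>Y. snd (Y i))"
  by (rule lipschitz_boundedI[where L = 1 and B = K])
    (auto simp: shell_states_def intro: order_trans[OF norm_snd_diff_le norm_le_dist_sum])

locale flocking = lipschitz_kernel +
  fixes \<sigma> :: real and N :: nat
  assumes \<sigma>_nonneg: "0 \<le> \<sigma>" and N_pos: "1 \<le> N"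
    and psi_nonneg: "\<And>r. r \<in> {0..2} \<Longrightarrow> 0 \<le> \<psi> r"

locale truncation = flocking +
  fixes K :: real
  assumes K_nonneg: "0 \<le> K"
begin

definition coupling_lip :: real where
  "coupling_lip = 4 * Lp * (13 * K + 7) + 4 * \<sigma>"

definition coupling_ext :: "(nat \<Rightarrow> (real^3) \<times> (real^3)) \<Rightarrow> nat \<Rightarrow> real^3" where
  "coupling_ext Y i = mcshane_ext N (sphere_states N K) coupling_lip (\<lambda>Y. coupling N \<psi> \<sigma> Y i) Y"

lemma coupling_lip_nonneg: "0 \<le> coupling_lip"
  using Lp_nonneg \<sigma>_nonneg K_nonneg by (simp add: coupling_lip_def)

lemma coupling_ext_eq: "Y \<in> sphere_states N K \<Longrightarrow> i < N \<Longrightarrow> coupling_ext Y i = coupling N \<psi> \<sigma> Y i"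
  unfolding coupling_ext_def using rest_state_in_sphere_states[OF K_nonneg]
  by (intro mcshane_ext_eq coupling_lip_nonneg)
    (auto simp: coupling_lip_def intro: coupling_lipschitz \<sigma>_nonneg)

lemma coupling_ext_lipschitz:
  assumes "i < N"
  shows "norm (coupling_ext Y i - coupling_ext Y' i) \<le> 3 * coupling_lip * dist_sum N Y Y'"
proof -
  have "norm (coupling_ext Y i - coupling_ext Y' i) \<le> CARD(3) * coupling_lip * dist_sum N Y Y'"
    unfolding coupling_ext_def using rest_state_in_sphere_states[OF K_nonneg] assms
    by (intro mcshane_ext_lipschitz coupling_lip_nonneg)
      (auto simp: coupling_lip_def intro: coupling_lipschitz \<sigma>_nonneg)
  then show ?thesis
    by simp
qed

lemma lipschitz_bounded_coupling_ext:
  assumes i: "i < N"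
  shows "lipschitz_bounded N (shell_states N K) (\<lambda>Y. coupling_ext Y i)"
proof (rule lipschitz_boundedI[where L = "3 * coupling_lip" and B = "3 * coupling_lip * (N * (K + 3))"])
  fix Y assume Y: "Y \<in> shell_states N K"
  have "coupling_ext rest_state i = 0"
    using coupling_ext_eq[OF rest_state_in_sphere_states[OF K_nonneg] i] by simp
  then have "norm (coupling_ext Y i) \<le> 3 * coupling_lip * dist_sum N Y rest_state"
    using coupling_ext_lipschitz[OF i, of Y rest_state] by simp
  also have "\<dots> \<le> 3 * coupling_lip * (N * (K + 3))"
    using dist_sum_rest_state_le[OF Y] coupling_lip_nonneg by (intro mult_left_mono) auto
  finally show "norm (coupling_ext Y i) \<le> 3 * coupling_lip * (N * (K + 3))" .
qed (use coupling_ext_lipschitz[OF i] coupling_lip_nonneg in auto)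

text \<open>The radial part of the acceleration is chosen such that the derivative of
  x \<bullet> v, namely v \<bullet> v + x \<bullet> (tangent_accel Y i), vanishes identically; hence solutions of the
  truncated system stay tangent and on the sphere, where tangent_accel agrees with accel.\<close>
definition tangent_accel :: "(nat \<Rightarrow> (real^3) \<times> (real^3)) \<Rightarrow> nat \<Rightarrow> real^3" where
  "tangent_accel Y i = coupling_ext Y i
     - ((snd (Y i) \<bullet> snd (Y i) + fst (Y i) \<bullet> coupling_ext Y i) / (fst (Y i) \<bullet> fst (Y i))) *\<^sub>R fst (Y i)"

lemma lipschitz_bounded_tangent_accel:
  assumes i: "i < N"
  shows "lipschitz_bounded N (shell_states N K) (\<lambda>Y. tangent_accel Y i)"
proof -
  have inv: "lipschitz_bounded N (shell_states N K) (\<lambda>Y. 1 / (fst (Y i) \<bullet> fst (Y i)))"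
  proof (rule lipschitz_bounded_inverse[where m = "1/4"])
    show "lipschitz_bounded N (shell_states N K) (\<lambda>Y. fst (Y i) \<bullet> fst (Y i))"
      by (intro lipschitz_bounded_bilinear[OF bounded_bilinear_inner] lipschitz_bounded_fst i)
    fix Y assume "Y \<in> shell_states N K"
    then have "(1/2)\<^sup>2 \<le> (norm (fst (Y i)))\<^sup>2"
      using i by (intro power_mono) (auto simp: shell_states_def)
    then show "1/4 \<le> fst (Y i) \<bullet> fst (Y i)"
      unfolding power2_norm_eq_inner by (simp add: power2_eq_square)
  qed simp
  have eq: "(\<lambda>Y. tangent_accel Y i) = (\<lambda>Y. coupling_ext Y i
      - ((snd (Y i) \<bullet> snd (Y i) + fst (Y i) \<bullet> coupling_ext Y i) * (1 / (fst (Y i) \<bullet> fst (Y i)))) *\<^sub>R fst (Y i))"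
    by (simp add: tangent_accel_def)
  show ?thesis
    unfolding eq
    by (intro inv lipschitz_bounded_diff lipschitz_bounded_add lipschitz_bounded_coupling_ext
        lipschitz_bounded_fst lipschitz_bounded_snd i
        lipschitz_bounded_bilinear[OF bounded_bilinear_scaleR]
        lipschitz_bounded_bilinear[OF bounded_bilinear_mult]
        lipschitz_bounded_bilinear[OF bounded_bilinear_inner])
qed

definition tangent_accel_lip :: "nat \<Rightarrow> real" where
  "tangent_accel_lip i = (SOME L. 0 \<le> L \<and> (\<forall>Y\<in>shell_states N K. \<forall>Y'\<in>shell_states N K.
      norm (tangent_accel Y i - tangent_accel Y' i) \<le> L * dist_sum N Y Y'))"

lemma tangent_accel_lip:
  assumes "i < N"
  shows "0 \<le> tangent_accel_lip i"
    and "\<And>Y Y'. Y \<in> shell_states N K \<Longrightarrow> Y' \<in> shell_states N K \<Longrightarrow>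
      norm (tangent_accel Y i - tangent_accel Y' i) \<le> tangent_accel_lip i * dist_sum N Y Y'"
proof -
  have "\<exists>L. 0 \<le> L \<and> (\<forall>Y\<in>shell_states N K. \<forall>Y'\<in>shell_states N K.
      norm (tangent_accel Y i - tangent_accel Y' i) \<le> L * dist_sum N Y Y')"
    using lipschitz_bounded_tangent_accel[OF assms] unfolding lipschitz_bounded_def by blast
  from someI_ex[OF this] show "0 \<le> tangent_accel_lip i"
    and "\<And>Y Y'. Y \<in> shell_states N K \<Longrightarrow> Y' \<in> shell_states N K \<Longrightarrow>
      norm (tangent_accel Y i - tangent_accel Y' i) \<le> tangent_accel_lip i * dist_sum N Y Y'"
    unfolding tangent_accel_lip_def by blast+
qed

definition tangent_accel_ext :: "(nat \<Rightarrow> (real^3) \<times> (real^3)) \<Rightarrow> nat \<Rightarrow> real^3" where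
  "tangent_accel_ext Y i = mcshane_ext N (shell_states N K) (tangent_accel_lip i) (\<lambda>Y. tangent_accel Y i) Y"

lemma tangent_accel_ext_eq: "Y \<in> shell_states N K \<Longrightarrow> i < N \<Longrightarrow> tangent_accel_ext Y i = tangent_accel Y i"
  unfolding tangent_accel_ext_def
  using sphere_states_subset_shell_states rest_state_in_sphere_states[OF K_nonneg] tangent_accel_lip
  by (intro mcshane_ext_eq) blast+

definition truncated_field :: "(nat \<Rightarrow> (real^3) \<times> (real^3)) \<Rightarrow> nat \<Rightarrow> (real^3) \<times> (real^3)" where
  "truncated_field Y i = (snd (Y i), tangent_accel_ext Y i)"

definition truncated_field_lip :: real where
  "truncated_field_lip = 1 + 3 * (\<Sum>j<N. tangent_accel_lip j)"

lemma truncated_field_lipschitz: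
  assumes i: "i < N"
  shows "norm (truncated_field Y i - truncated_field Y' i) \<le> truncated_field_lip * dist_sum N Y Y'"
proof -
  have "norm (tangent_accel_ext Y i - tangent_accel_ext Y' i) \<le> 3 * tangent_accel_lip i * dist_sum N Y Y'"
    unfolding tangent_accel_ext_def
    using sphere_states_subset_shell_states rest_state_in_sphere_states[OF K_nonneg] tangent_accel_lip[OF i]
    by (intro mcshane_ext_lipschitz[where 'n = 3, simplified]) blast+
  also have "\<dots> \<le> 3 * (\<Sum>j<N. tangent_accel_lip j) * dist_sum N Y Y'"
    using i tangent_accel_lip(1) dist_sum_nonneg
    by (intro mult_right_mono mult_left_mono member_le_sum) auto
  finally have "norm (snd (Y i) - snd (Y' i)) + norm (tangent_accel_ext Y i - tangent_accel_ext Y' i)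
      \<le> truncated_field_lip * dist_sum N Y Y'"
    using order_trans[OF norm_snd_diff_le norm_le_dist_sum[OF i], of Y Y']
    by (simp add: truncated_field_lip_def algebra_simps)
  then show ?thesis
    unfolding truncated_field_def using norm_Pair_le order_trans by fastforce
qed

sublocale truncated: lipschitz_system truncated_field truncated_field_lip N
proof
  have "0 \<le> (\<Sum>j<N. tangent_accel_lip j)"
    using tangent_accel_lip(1) by (intro sum_nonneg) simp
  then show "0 \<le> truncated_field_lip"
    by (simp add: truncated_field_lip_def)
qed (rule truncated_field_lipschitz)

end

lemma has_real_derivative_inner:
  fixes f g :: "real \<Rightarrow> 'a::real_inner"
  assumes "(f has_vector_derivative f') (at t within S)" "(g has_vector_derivative g') (at t within S)"
  shows "((\<lambda>t. f t \<bullet> g t) has_real_derivative f t \<bullet> g' + f' \<bullet> g t) (at t within S)"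
proof -
  have "((\<lambda>t. f t \<bullet> g t) has_derivative (\<lambda>h. f t \<bullet> (h *\<^sub>R g') + (h *\<^sub>R f') \<bullet> g t)) (at t within S)"
    using assms unfolding has_vector_derivative_def by (intro has_derivative_inner)
  moreover have "(\<lambda>h. f t \<bullet> (h *\<^sub>R g') + (h *\<^sub>R f') \<bullet> g t) = (*) (f t \<bullet> g' + f' \<bullet> g t)"
    by (auto simp: algebra_simps)
  ultimately show ?thesis
    unfolding has_field_derivative_def by simp
qed

lemma bounded_on_Icc:
  fixes f :: "real \<Rightarrow> real"
  assumes "continuous_on {a..b} f"
  obtains B where "0 \<le> B" "\<And>t. t \<in> {a..b} \<Longrightarrow> f t \<le> B"
proof -
  have "bounded (f ` {a..b})"
    by (intro compact_imp_bounded compact_continuous_image[OF assms compact_Icc])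
  then obtain B where "\<forall>y\<in>f ` {a..b}. norm y \<le> B"
    by (auto simp: bounded_iff)
  then show ?thesis
    by (intro that[of "max B 0"]) (auto simp: le_max_iff_disj abs_le_iff)
qed

lemma inner_fst_coupling:
  "fst (Y i) \<bullet> coupling N \<psi> \<sigma> Y i
    = (\<Sum>j<N. (psi_ext \<psi> (norm (fst (Y i) - fst (Y j))) / real N) *
        (fst (Y i) \<bullet> (rotR (fst (Y j)) (fst (Y i)) *v snd (Y j)) - fst (Y i) \<bullet> snd (Y i)))"
proof -
  have "fst (Y i) \<bullet> (\<Sum>k<N. (\<sigma> / real N) *\<^sub>R
      ((norm (fst (Y i)))\<^sup>2 *\<^sub>R fst (Y k) - (fst (Y i) \<bullet> fst (Y k)) *\<^sub>R fst (Y i))) = 0"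
    by (simp add: power2_norm_eq_inner inner_sum_right inner_diff_right algebra_simps)
  then show ?thesis
    unfolding coupling_def by (simp add: inner_add_right inner_sum_right inner_diff_right)
qed

lemma inner_snd_coupling:
  "snd (Y i) \<bullet> coupling N \<psi> \<sigma> Y i
    = (\<Sum>j<N. (psi_ext \<psi> (norm (fst (Y i) - fst (Y j))) / real N) *
        (snd (Y i) \<bullet> (rotR (fst (Y j)) (fst (Y i)) *v snd (Y j)) - snd (Y i) \<bullet> snd (Y i)))
      + (\<Sum>k<N. (\<sigma> / real N) * ((norm (fst (Y i)))\<^sup>2 * (snd (Y i) \<bullet> fst (Y k))
          - (fst (Y i) \<bullet> fst (Y k)) * (snd (Y i) \<bullet> fst (Y i))))"
  unfolding coupling_def by (simp add: inner_add_right inner_sum_right inner_diff_right)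

context lipschitz_kernel
begin

text \<open>The radial component of the coupling only involves the radial velocities
  x \<bullet> v, because R(x_j, x_i) maps the tangent plane at x_j to the one at x_i.\<close>
lemma abs_inner_fst_coupling_le:
  assumes M: "\<And>k. k < N \<Longrightarrow> \<bar>fst (Y k) \<bullet> snd (Y k)\<bar> \<le> M"
    and i: "i < N"
  shows "\<bar>fst (Y i) \<bullet> coupling N \<psi> \<sigma> Y i\<bar> \<le> 2 * Lp * (2 + fst (Y i) \<bullet> fst (Y i)) * M"
proof -
  have M0: "0 \<le> M"
    using M[OF i] by linarith
  have "\<bar>(psi_ext \<psi> (norm (fst (Y i) - fst (Y k))) / real N) *
        (fst (Y i) \<bullet> (rotR (fst (Y k)) (fst (Y i)) *v snd (Y k)) - fst (Y i) \<bullet> snd (Y i))\<bar>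
      \<le> (2 * Lp / real N) * ((2 + fst (Y i) \<bullet> fst (Y i)) * M)" if k: "k < N" for k
  proof -
    have r: "0 \<le> fst (Y i) \<bullet> fst (Y i)"
      by simp
    consider "fst (Y k) = - fst (Y i)" | "fst (Y k) = fst (Y i)" "fst (Y k) \<noteq> - fst (Y i)"
      | "fst (Y k) \<noteq> fst (Y i)" "fst (Y k) \<noteq> - fst (Y i)"
      by blast
    then have "\<bar>fst (Y i) \<bullet> (rotR (fst (Y k)) (fst (Y i)) *v snd (Y k))\<bar> \<le> (1 + fst (Y i) \<bullet> fst (Y i)) * M"
    proof cases
      case 1
      then show ?thesis
        using r M0 by (simp add: inner_rotR_mult_vec)
    next
      case 2
      then have "fst (Y i) \<bullet> (rotR (fst (Y k)) (fst (Y i)) *v snd (Y k)) = fst (Y k) \<bullet> snd (Y k)"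
        by (subst inner_rotR_mult_vec) simp
      moreover have "M \<le> (1 + fst (Y i) \<bullet> fst (Y i)) * M"
        using r M0 by (simp add: algebra_simps)
      ultimately show ?thesis
        using M[OF k] by linarith
    next
      case 3
      then have "\<bar>fst (Y i) \<bullet> (rotR (fst (Y k)) (fst (Y i)) *v snd (Y k))\<bar>
          = (fst (Y i) \<bullet> fst (Y i)) * \<bar>fst (Y k) \<bullet> snd (Y k)\<bar>"
        by (simp add: inner_rotR_mult_vec abs_mult)
      also have "\<dots> \<le> (fst (Y i) \<bullet> fst (Y i)) * M"
        using M[OF k] r by (rule mult_left_mono)
      finally show ?thesis
        using M0 by (simp add: algebra_simps)
    qed
    then have "\<bar>fst (Y i) \<bullet> (rotR (fst (Y k)) (fst (Y i)) *v snd (Y k)) - fst (Y i) \<bullet> snd (Y i)\<bar>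
        \<le> (2 + fst (Y i) \<bullet> fst (Y i)) * M"
      using M[OF i] by (simp add: algebra_simps)
    moreover have "\<bar>psi_ext \<psi> (norm (fst (Y i) - fst (Y k))) / real N\<bar> \<le> 2 * Lp / real N"
      using abs_psi_ext_le[of "norm (fst (Y i) - fst (Y k))"] by (simp add: divide_right_mono)
    ultimately show ?thesis
      unfolding abs_mult using Lp_nonneg by (intro mult_mono) auto
  qed
  then have "\<bar>fst (Y i) \<bullet> coupling N \<psi> \<sigma> Y i\<bar> \<le> (\<Sum>k<N. (2 * Lp / real N) * ((2 + fst (Y i) \<bullet> fst (Y i)) * M))"
    unfolding inner_fst_coupling by (intro order_trans[OF sum_abs sum_mono]) auto
  also have "\<dots> = 2 * Lp * (2 + fst (Y i) \<bullet> fst (Y i)) * M"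
    using i by simp
  finally show ?thesis .
qed

end

lemma sphere_defect_growth:
  fixes x v c :: "'a::real_inner"
  assumes xv: "\<bar>x \<bullet> v\<bar> \<le> m" and xx: "\<bar>x \<bullet> x - 1\<bar> \<le> m" and xc: "\<bar>x \<bullet> c\<bar> \<le> C * m" and C: "0 \<le> C"
  shows "2 * (x \<bullet> v) * (x \<bullet> (- ((norm v)\<^sup>2 / (norm x)\<^sup>2) *\<^sub>R x + c) + v \<bullet> v)
      + 2 * (x \<bullet> x - 1) * (2 * (x \<bullet> v)) \<le> (2 * C + 4) * m\<^sup>2"
proof (cases "x = 0")
  case True
  then show ?thesis
    using xv C by simp
next
  case False
  have m: "0 \<le> m"
    using xv abs_ge_zero order_trans by blast
  from False have "(norm x)\<^sup>2 \<noteq> 0"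
    by simp
  then have "x \<bullet> (- ((norm v)\<^sup>2 / (norm x)\<^sup>2) *\<^sub>R x + c) + v \<bullet> v = x \<bullet> c"
    by (simp add: inner_add_right inner_diff_right power2_norm_eq_inner[symmetric])
  moreover have "(x \<bullet> v) * (x \<bullet> c) \<le> m * (C * m)"
    using abs_ge_self[of "(x \<bullet> v) * (x \<bullet> c)"] mult_mono[OF xv xc m abs_ge_zero] by (simp add: abs_mult)
  moreover have "(x \<bullet> x - 1) * (x \<bullet> v) \<le> m * m"
    using abs_ge_self[of "(x \<bullet> x - 1) * (x \<bullet> v)"] mult_mono[OF xx xv m abs_ge_zero] by (simp add: abs_mult)
  ultimately show ?thesis
    by (simp add: power2_eq_square algebra_simps)
qed

lemma sum_sym_weighted_nonpos:
  fixes p :: "nat \<Rightarrow> nat \<Rightarrow> real" and n :: "nat \<Rightarrow> real"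
  assumes "\<And>i j. 0 \<le> p i j" and "\<And>i j. p i j = p j i"
  shows "(\<Sum>i<N. \<Sum>j<N. p i j * (n i * n j - n i * n i)) \<le> 0"
proof -
  define A where "A = (\<Sum>i<N. \<Sum>j<N. p i j * (n i * n j - n i * n i))"
  have "A = (\<Sum>j<N. \<Sum>i<N. p i j * (n i * n j - n i * n i))"
    unfolding A_def by (rule sum.swap)
  also have "\<dots> = (\<Sum>i<N. \<Sum>j<N. p i j * (n i * n j - n j * n j))"
    using assms(2) by (simp add: mult.commute)
  finally have A2: "A = (\<Sum>i<N. \<Sum>j<N. p i j * (n i * n j - n j * n j))" .
  have "A + A = (\<Sum>i<N. \<Sum>j<N. p i j * (n i * n j - n i * n i) + p i j * (n i * n j - n j * n j))"
    unfolding sum.distrib by (metis A2 A_def)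
  also have "\<dots> = (\<Sum>i<N. \<Sum>j<N. - (p i j * (n i - n j)\<^sup>2))"
    by (intro sum.cong refl) (simp add: power2_eq_square algebra_simps)
  also have "\<dots> \<le> 0"
    using assms(1) by (intro sum_nonpos) auto
  finally show ?thesis
    unfolding A_def by simp
qed

context flocking
begin

lemma sphere_tangency_invariant:
  fixes x v :: "nat \<Rightarrow> real \<Rightarrow> real^3"
  assumes dx: "\<And>i t. i < N \<Longrightarrow> t \<in> {0..T} \<Longrightarrow> (x i has_vector_derivative v i t) (at t within {0..T})"
    and dv: "\<And>i t. i < N \<Longrightarrow> t \<in> {0..T} \<Longrightarrow>
      (v i has_vector_derivative accel N \<psi> \<sigma> x v i t) (at t within {0..T})"
    and init: "\<And>i. i < N \<Longrightarrow> norm (x i 0) = 1 \<and> x i 0 \<bullet> v i 0 = 0"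
    and t: "t \<in> {0..T}" and i: "i < N"
  shows "norm (x i t) = 1 \<and> x i t \<bullet> v i t = 0"
proof -
  define q where "q s = (\<Sum>j<N. (x j s \<bullet> v j s) * (x j s \<bullet> v j s) + (x j s \<bullet> x j s - 1) * (x j s \<bullet> x j s - 1))" for s
  define q' where "q' s = (\<Sum>j<N. 2 * (x j s \<bullet> v j s) * (x j s \<bullet> accel N \<psi> \<sigma> x v j s + v j s \<bullet> v j s)
      + 2 * (x j s \<bullet> x j s - 1) * (2 * (x j s \<bullet> v j s)))" for s
  have "continuous_on {0..T} (x j)" if "j < N" for j
    using dx[OF that] by (meson continuous_on_eq_continuous_within has_vector_derivative_continuous)
  then have "continuous_on {0..T} (\<lambda>s. \<Sum>j<N. x j s \<bullet> x j s)"
    by (intro continuous_on_sum continuous_on_inner) auto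
  then obtain B where B: "0 \<le> B" "\<And>s. s \<in> {0..T} \<Longrightarrow> (\<Sum>j<N. x j s \<bullet> x j s) \<le> B"
    by (rule bounded_on_Icc) blast
  have q_nonneg: "0 \<le> q s" for s
    unfolding q_def by (intro sum_nonneg) auto
  have le_sqrt_q: "\<bar>x j s \<bullet> v j s\<bar> \<le> sqrt (q s)" "\<bar>x j s \<bullet> x j s - 1\<bar> \<le> sqrt (q s)" if "j < N" for j s
  proof -
    have "(x j s \<bullet> v j s)\<^sup>2 + (x j s \<bullet> x j s - 1)\<^sup>2 \<le> q s"
      unfolding q_def power2_eq_square using that by (intro member_le_sum) auto
    then have "(x j s \<bullet> v j s)\<^sup>2 \<le> q s" "(x j s \<bullet> x j s - 1)\<^sup>2 \<le> q s"
      using zero_le_power2[of "x j s \<bullet> v j s"] zero_le_power2[of "x j s \<bullet> x j s - 1"] by linarith+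
    then show "\<bar>x j s \<bullet> v j s\<bar> \<le> sqrt (q s)" "\<bar>x j s \<bullet> x j s - 1\<bar> \<le> sqrt (q s)"
      by (simp_all add: real_le_rsqrt)
  qed
  have "(q has_real_derivative q' s) (at s within {0..T})" if s: "s \<in> {0..T}" for s
    unfolding q_def q'_def
  proof (rule DERIV_sum)
    fix j assume "j \<in> {..<N}"
    then have j: "j < N"
      by simp
    have dS: "((\<lambda>s. x j s \<bullet> v j s) has_real_derivative x j s \<bullet> accel N \<psi> \<sigma> x v j s + v j s \<bullet> v j s)
        (at s within {0..T})"
      using has_real_derivative_inner[OF dx[OF j s] dv[OF j s]] by simp
    have dr: "((\<lambda>s. x j s \<bullet> x j s - 1) has_real_derivative 2 * (x j s \<bullet> v j s)) (at s within {0..T})"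
      using has_real_derivative_inner[OF dx[OF j s] dx[OF j s]]
      by (auto intro!: derivative_eq_intros simp: inner_commute)
    show "((\<lambda>s. (x j s \<bullet> v j s) * (x j s \<bullet> v j s) + (x j s \<bullet> x j s - 1) * (x j s \<bullet> x j s - 1))
        has_real_derivative 2 * (x j s \<bullet> v j s) * (x j s \<bullet> accel N \<psi> \<sigma> x v j s + v j s \<bullet> v j s)
          + 2 * (x j s \<bullet> x j s - 1) * (2 * (x j s \<bullet> v j s))) (at s within {0..T})"
      using DERIV_add[OF DERIV_mult[OF dS dS] DERIV_mult[OF dr dr]] by (simp add: algebra_simps)
  qed
  moreover have "q' s \<le> (N * (4 * Lp * (2 + B) + 4)) * q s" if s: "s \<in> {0..T}" for s
  proof -
    have "2 * (x j s \<bullet> v j s) * (x j s \<bullet> accel N \<psi> \<sigma> x v j s + v j s \<bullet> v j s)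
        + 2 * (x j s \<bullet> x j s - 1) * (2 * (x j s \<bullet> v j s)) \<le> (4 * Lp * (2 + B) + 4) * q s" if j: "j < N" for j
    proof -
      have "x j s \<bullet> x j s \<le> B"
        using B(2)[OF s] member_le_sum[of j "{..<N}" "\<lambda>j. x j s \<bullet> x j s"] j by simp
      have "\<bar>x j s \<bullet> coupling N \<psi> \<sigma> (\<lambda>k. (x k s, v k s)) j\<bar> \<le> 2 * Lp * (2 + x j s \<bullet> x j s) * sqrt (q s)"
        using abs_inner_fst_coupling_le[where Y = "\<lambda>k. (x k s, v k s)" and M = "sqrt (q s)" and i = j]
          le_sqrt_q j by simp
      also have "\<dots> \<le> (2 * Lp * (2 + B)) * sqrt (q s)"
        using \<open>x j s \<bullet> x j s \<le> B\<close> Lp_nonneg q_nonneg[of s] by (intro mult_right_mono mult_left_mono) auto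
      finally have "\<bar>x j s \<bullet> coupling N \<psi> \<sigma> (\<lambda>k. (x k s, v k s)) j\<bar> \<le> (2 * Lp * (2 + B)) * sqrt (q s)" .
      then have "2 * (x j s \<bullet> v j s) * (x j s \<bullet> (- ((norm (v j s))\<^sup>2 / (norm (x j s))\<^sup>2) *\<^sub>R x j s
            + coupling N \<psi> \<sigma> (\<lambda>k. (x k s, v k s)) j) + v j s \<bullet> v j s)
          + 2 * (x j s \<bullet> x j s - 1) * (2 * (x j s \<bullet> v j s)) \<le> (2 * (2 * Lp * (2 + B)) + 4) * (sqrt (q s))\<^sup>2"
        using le_sqrt_q[OF j] Lp_nonneg B(1) by (intro sphere_defect_growth) auto
      then show ?thesis
        using q_nonneg[of s] by (simp add: accel_eq_coupling algebra_simps)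
    qed
    then have "q' s \<le> (\<Sum>j<N. (4 * Lp * (2 + B) + 4) * q s)"
      unfolding q'_def by (intro sum_mono) auto
    then show ?thesis
      by simp
  qed
  moreover have "q 0 \<le> 0"
    using init by (simp add: q_def power2_norm_eq_inner[symmetric])
  ultimately have "q t \<le> 0"
    using gronwall_nonpos[of q T q'] t by blast
  then have "q t = 0"
    using q_nonneg[of t] by simp
  then show ?thesis
    using le_sqrt_q[OF i, of t] by (simp add: norm_eq_sqrt_inner)
qed

lemma psi_ext_nonneg: "0 \<le> d \<Longrightarrow> 0 \<le> psi_ext \<psi> d"
  using psi_nonneg[of d] by (simp add: psi_ext_def)

lemma energy_dissipation:
  assumes Y: "\<And>i. i < N \<Longrightarrow> norm (fst (Y i)) = 1 \<and> fst (Y i) \<bullet> snd (Y i) = 0"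
  shows "(\<Sum>i<N. snd (Y i) \<bullet> coupling N \<psi> \<sigma> Y i) \<le> (\<sigma> / N) * (\<Sum>i<N. \<Sum>k<N. snd (Y i) \<bullet> fst (Y k))"
proof -
  define p where "p i j = psi_ext \<psi> (norm (fst (Y i) - fst (Y j)))" for i j
  have p: "0 \<le> p i j" "p i j = p j i" for i j
    by (simp_all add: p_def psi_ext_nonneg norm_minus_commute)
  define S where "S = (\<Sum>i<N. \<Sum>j<N. p i j * (snd (Y i) \<bullet> (rotR (fst (Y j)) (fst (Y i)) *v snd (Y j))
      - snd (Y i) \<bullet> snd (Y i)))"
  have eq: "(\<Sum>i<N. snd (Y i) \<bullet> coupling N \<psi> \<sigma> Y i) = (1 / N) * S + (\<sigma> / N) * (\<Sum>i<N. \<Sum>k<N. snd (Y i) \<bullet> fst (Y k))"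
    using Y unfolding inner_snd_coupling p_def S_def
    by (simp add: sum.distrib sum_distrib_left sum_divide_distrib inner_commute algebra_simps)
  have "S \<le> (\<Sum>i<N. \<Sum>j<N. p i j * (norm (snd (Y i)) * norm (snd (Y j)) - norm (snd (Y i)) * norm (snd (Y i))))"
    unfolding S_def
  proof (intro sum_mono mult_left_mono p(1) diff_mono)
    fix i j assume "i \<in> {..<N}" "j \<in> {..<N}"
    then have "norm (rotR (fst (Y j)) (fst (Y i)) *v snd (Y j)) \<le> norm (snd (Y j))"
      using Y by (intro norm_rotR_mult_vec_le) auto
    then show "snd (Y i) \<bullet> (rotR (fst (Y j)) (fst (Y i)) *v snd (Y j)) \<le> norm (snd (Y i)) * norm (snd (Y j))"
      by (meson norm_cauchy_schwarz mult_left_mono norm_ge_zero order_trans)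
  qed (simp add: norm_eq_sqrt_inner)
  also have "\<dots> \<le> 0"
    using p by (rule sum_sym_weighted_nonpos)
  finally have "(1 / N) * S \<le> 0"
    by (simp add: divide_nonpos_nonneg)
  then show ?thesis
    unfolding eq by simp
qed

lemma kinetic_energy_bound:
  fixes x v :: "nat \<Rightarrow> real \<Rightarrow> real^3"
  assumes dx: "\<And>i t. i < N \<Longrightarrow> t \<in> {0..T} \<Longrightarrow> (x i has_vector_derivative v i t) (at t within {0..T})"
    and dv: "\<And>i t. i < N \<Longrightarrow> t \<in> {0..T} \<Longrightarrow>
      (v i has_vector_derivative accel N \<psi> \<sigma> x v i t) (at t within {0..T})"
    and sphere: "\<And>i t. i < N \<Longrightarrow> t \<in> {0..T} \<Longrightarrow> norm (x i t) = 1 \<and> x i t \<bullet> v i t = 0"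
    and t: "t \<in> {0..T}"
  shows "(\<Sum>i<N. v i t \<bullet> v i t) \<le> (\<Sum>i<N. v i 0 \<bullet> v i 0) + \<sigma> * N"
proof -
  define E where "E s = (\<Sum>i<N. v i s \<bullet> v i s) - (\<sigma> / N) * (\<Sum>i<N. \<Sum>k<N. x i s \<bullet> x k s)" for s
  define E' where "E' s = (\<Sum>i<N. 2 * (v i s \<bullet> accel N \<psi> \<sigma> x v i s))
      - (\<sigma> / N) * (\<Sum>i<N. \<Sum>k<N. x i s \<bullet> v k s + v i s \<bullet> x k s)" for s
  have deriv: "((\<lambda>s. E s - E 0) has_real_derivative E' s) (at s within {0..T})" if s: "s \<in> {0..T}" for s
  proof -
    have "((\<lambda>s. v i s \<bullet> v i s) has_real_derivative 2 * (v i s \<bullet> accel N \<psi> \<sigma> x v i s)) (at s within {0..T})"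
      if "i < N" for i
      using has_real_derivative_inner[OF dv[OF that s] dv[OF that s]] by (simp add: inner_commute)
    moreover have "((\<lambda>s. x i s \<bullet> x k s) has_real_derivative x i s \<bullet> v k s + v i s \<bullet> x k s) (at s within {0..T})"
      if "i < N" "k < N" for i k
      using has_real_derivative_inner[OF dx[OF that(1) s] dx[OF that(2) s]] by (simp add: inner_commute)
    ultimately have "(E has_real_derivative E' s) (at s within {0..T})"
      unfolding E_def E'_def by (intro DERIV_diff DERIV_cmult DERIV_sum) auto
    then show ?thesis
      using DERIV_diff[OF _ DERIV_const[of "E 0"]] by simp
  qed
  have nonpos: "E' s \<le> 0 * (E s - E 0)" if s: "s \<in> {0..T}" for s
  proof -
    have accel: "v i s \<bullet> accel N \<psi> \<sigma> x v i s = v i s \<bullet> coupling N \<psi> \<sigma> (\<lambda>k. (x k s, v k s)) i" if "i < N" for i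
      using sphere[OF that s] by (simp add: accel_eq_coupling inner_add_right inner_diff_right inner_commute)
    have swap: "(\<Sum>i<N. \<Sum>k<N. x i s \<bullet> v k s + v i s \<bullet> x k s) = 2 * (\<Sum>i<N. \<Sum>k<N. v i s \<bullet> x k s)"
    proof -
      have "(\<Sum>i<N. \<Sum>k<N. x i s \<bullet> v k s) = (\<Sum>k<N. \<Sum>i<N. v k s \<bullet> x i s)"
        by (subst sum.swap) (simp add: inner_commute)
      then show ?thesis
        by (simp add: sum.distrib)
    qed
    have "E' s = 2 * ((\<Sum>i<N. v i s \<bullet> coupling N \<psi> \<sigma> (\<lambda>k. (x k s, v k s)) i)
        - (\<sigma> / N) * (\<Sum>i<N. \<Sum>k<N. v i s \<bullet> x k s))"
      unfolding E'_def swap using accel by (simp add: sum_distrib_left[symmetric] algebra_simps)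
    moreover have "(\<Sum>i<N. v i s \<bullet> coupling N \<psi> \<sigma> (\<lambda>k. (x k s, v k s)) i)
        \<le> (\<sigma> / N) * (\<Sum>i<N. \<Sum>k<N. v i s \<bullet> x k s)"
      using energy_dissipation[where Y = "\<lambda>k. (x k s, v k s)"] sphere s by simp
    ultimately show ?thesis
      by simp
  qed
  have "E t - E 0 \<le> 0"
    using gronwall_nonpos[of "\<lambda>s. E s - E 0" T E' 0 t, OF _ deriv nonpos t] by simp
  moreover have "(\<sigma> / N) * (\<Sum>i<N. \<Sum>k<N. x i t \<bullet> x k t) \<le> \<sigma> * N"
  proof -
    have "x i t \<bullet> x k t \<le> 1" if "i < N" "k < N" for i k
      using norm_cauchy_schwarz[of "x i t" "x k t"] sphere[OF that(1) t] sphere[OF that(2) t] by simp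
    then have "(\<Sum>i<N. \<Sum>k<N. x i t \<bullet> x k t) \<le> (\<Sum>i<N. \<Sum>k<N. 1)"
      by (intro sum_mono) auto
    then have "(\<Sum>i<N. \<Sum>k<N. x i t \<bullet> x k t) \<le> N * N"
      by simp
    then have "(\<sigma> / N) * (\<Sum>i<N. \<Sum>k<N. x i t \<bullet> x k t) \<le> (\<sigma> / N) * (N * N)"
      using \<sigma>_nonneg by (intro mult_left_mono) auto
    then show ?thesis
      using N_pos by simp
  qed
  moreover have "0 \<le> (\<sigma> / N) * (\<Sum>i<N. \<Sum>k<N. x i 0 \<bullet> x k 0)"
  proof -
    have "(\<Sum>i<N. \<Sum>k<N. x i 0 \<bullet> x k 0) = (\<Sum>i<N. x i 0) \<bullet> (\<Sum>k<N. x k 0)"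
      by (simp add: inner_sum_left inner_sum_right) (rule sum.swap)
    then show ?thesis
      using \<sigma>_nonneg by simp
  qed
  ultimately show ?thesis
    unfolding E_def by linarith
qed

end

lemma has_vector_derivative_fst:
  "(f has_vector_derivative f') F \<Longrightarrow> ((\<lambda>t. fst (f t)) has_vector_derivative fst f') F"
  using has_derivative_fst unfolding has_vector_derivative_def by fastforce

lemma has_vector_derivative_snd:
  "(f has_vector_derivative f') F \<Longrightarrow> ((\<lambda>t. snd (f t)) has_vector_derivative snd f') F"
  using has_derivative_snd unfolding has_vector_derivative_def by fastforce

lemma constant_on_Icc:
  fixes f :: "real \<Rightarrow> real"
  assumes "\<And>s. s \<in> {0..T} \<Longrightarrow> (f has_real_derivative 0) (at s within {0..T})" and "s \<in> {0..T}"
  shows "f s = f 0"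
proof -
  obtain c where "\<forall>s\<in>{0..T}. f s = c"
    using has_field_derivative_zero_constant[OF convex_real_interval(5) assms(1)] by blast
  then show ?thesis
    using assms(2) by auto
qed

lemma real_induction_nonneg:
  fixes P :: "real \<Rightarrow> bool"
  assumes step: "\<And>t. 0 \<le> t \<Longrightarrow> (\<And>s. 0 \<le> s \<Longrightarrow> s < t \<Longrightarrow> P s) \<Longrightarrow> \<exists>d>0. \<forall>s. t \<le> s \<longrightarrow> s < t + d \<longrightarrow> P s"
    and t: "0 \<le> t"
  shows "P t"
proof (rule ccontr)
  assume "\<not> P t"
  define A where "A = {s. 0 \<le> s \<and> \<not> P s}"
  have A: "t \<in> A" "bdd_below A"
    using t \<open>\<not> P t\<close> by (auto simp: A_def intro: bdd_belowI[of _ 0])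
  have inf_nonneg: "0 \<le> Inf A"
    using A by (intro cInf_greatest) (auto simp: A_def)
  have "P s" if "0 \<le> s" "s < Inf A" for s
    using cInf_lower[OF _ A(2), of s] that by (force simp: A_def)
  then obtain d where d: "0 < d" "\<And>s. Inf A \<le> s \<Longrightarrow> s < Inf A + d \<Longrightarrow> P s"
    using step[OF inf_nonneg] by blast
  have "Inf A + d \<le> Inf A"
  proof (rule cInf_greatest)
    fix s assume s: "s \<in> A"
    then have "Inf A \<le> s"
      using A(2) by (rule cInf_lower)
    with s d(2)[of s] show "Inf A + d \<le> s"
      by (force simp: A_def)
  qed (use A in auto)
  with d(1) show False
    by simp
qed

context truncation
begin

lemma tangent_accel_sphere_states:
  assumes Y: "Y \<in> sphere_states N K" and tangent: "\<And>j. j < N \<Longrightarrow> fst (Y j) \<bullet> snd (Y j) = 0"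
    and i: "i < N"
  shows "tangent_accel Y i = - ((norm (snd (Y i)))\<^sup>2 / (norm (fst (Y i)))\<^sup>2) *\<^sub>R fst (Y i) + coupling N \<psi> \<sigma> Y i"
proof -
  have "fst (Y i) \<bullet> coupling N \<psi> \<sigma> Y i = 0"
    using abs_inner_fst_coupling_le[where Y = Y and M = 0 and i = i] tangent i by simp
  moreover have "norm (fst (Y i)) = 1"
    using Y i by (simp add: sphere_states_def)
  ultimately show ?thesis
    using Y i by (simp add: tangent_accel_def coupling_ext_eq power2_norm_eq_inner[symmetric])
qed

lemma truncated_solution_invariants_on:
  assumes Z: "truncated.solves_from Z0 Z"
    and Z0: "\<And>i. i < N \<Longrightarrow> norm (fst (Z0 i)) = 1 \<and> fst (Z0 i) \<bullet> snd (Z0 i) = 0"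
    and shell: "\<And>s. s \<in> {0..T} \<Longrightarrow> Z s \<in> shell_states N K"
    and s: "s \<in> {0..T}" and i: "i < N"
  shows "norm (fst (Z s i)) = 1 \<and> fst (Z s i) \<bullet> snd (Z s i) = 0
    \<and> (\<Sum>j<N. snd (Z s j) \<bullet> snd (Z s j)) \<le> (\<Sum>j<N. snd (Z0 j) \<bullet> snd (Z0 j)) + \<sigma> * N"
proof -
  define x where "x j s = fst (Z s j)" for j s
  define v where "v j s = snd (Z s j)" for j s
  have dZ: "((\<lambda>t. Z t j) has_vector_derivative truncated_field (Z s) j) (at s within {0..T})"
    if "j < N" "s \<in> {0..T}" for j s
  proof (rule has_vector_derivative_within_subset)
    show "((\<lambda>t. Z t j) has_vector_derivative truncated_field (Z s) j) (at s within {0..})"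
      using Z that unfolding truncated.solves_from_def by auto
  qed auto
  have dx: "(x j has_vector_derivative v j s) (at s within {0..T})" if "j < N" "s \<in> {0..T}" for j s
    using has_vector_derivative_fst[OF dZ[OF that]]
    by (simp add: x_def[abs_def] v_def truncated_field_def)
  have dv: "(v j has_vector_derivative tangent_accel (Z s) j) (at s within {0..T})"
    if "j < N" "s \<in> {0..T}" for j s
    using has_vector_derivative_snd[OF dZ[OF that]] tangent_accel_ext_eq[OF shell[OF that(2)] that(1)]
    by (simp add: v_def[abs_def] truncated_field_def)
  have init: "x j 0 = fst (Z0 j)" "v j 0 = snd (Z0 j)" if "j < N" for j
    using Z that by (simp_all add: truncated.solves_from_def x_def v_def)
  have "((\<lambda>s. x j s \<bullet> v j s) has_real_derivative 0) (at s within {0..T})" if j: "j < N" and s: "s \<in> {0..T}" for j s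
  proof -
    have "x j s \<bullet> x j s \<noteq> 0"
      using shell[OF s] j by (auto simp: shell_states_def x_def)
    then have "x j s \<bullet> tangent_accel (Z s) j + v j s \<bullet> v j s = 0"
      by (simp add: tangent_accel_def x_def v_def inner_diff_right)
    then show ?thesis
      using has_real_derivative_inner[OF dx[OF j s] dv[OF j s]] by (simp add: inner_commute)
  qed
  then have tangent: "x j s \<bullet> v j s = 0" if "j < N" "s \<in> {0..T}" for j s
    using constant_on_Icc[of T "\<lambda>s. x j s \<bullet> v j s" s] init Z0 that by simp
  have "((\<lambda>s. x j s \<bullet> x j s) has_real_derivative 0) (at s within {0..T})" if "j < N" "s \<in> {0..T}" for j s
    using has_real_derivative_inner[OF dx[OF that] dx[OF that]] tangent[OF that] by (simp add: inner_commute)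
  then have "x j s \<bullet> x j s = 1" if "j < N" "s \<in> {0..T}" for j s
    using constant_on_Icc[of T "\<lambda>s. x j s \<bullet> x j s" s] init Z0 that
    by (simp add: power2_norm_eq_inner[symmetric])
  then have unit: "norm (x j s) = 1" if "j < N" "s \<in> {0..T}" for j s
    using that by (simp add: norm_eq_sqrt_inner)
  have "(v j has_vector_derivative accel N \<psi> \<sigma> x v j s) (at s within {0..T})" if "j < N" "s \<in> {0..T}" for j s
  proof -
    have "Z s \<in> sphere_states N K"
      using shell[OF that(2)] unit[OF _ that(2)] by (auto simp: shell_states_def sphere_states_def x_def)
    then have "tangent_accel (Z s) j = accel N \<psi> \<sigma> x v j s"
      using tangent_accel_sphere_states[of "Z s" j] tangent[OF _ that(2)] that
      by (simp add: accel_eq_coupling x_def v_def)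
    then show ?thesis
      using dv[OF that] by simp
  qed
  then have "(\<Sum>j<N. v j s \<bullet> v j s) \<le> (\<Sum>j<N. v j 0 \<bullet> v j 0) + \<sigma> * N"
    using dx unit tangent s by (intro kinetic_energy_bound) auto
  then show ?thesis
    using unit[OF i s] tangent[OF i s] init by (simp add: x_def v_def)
qed

lemma truncated_solution_continuous:
  assumes "truncated.solves_from Z0 Z" "i < N" "0 \<le> t"
  shows "continuous (at t within {0..}) (\<lambda>s. Z s i)"
  using assms unfolding truncated.solves_from_def by (blast intro: has_vector_derivative_continuous)

lemma truncated_solution_invariants_upto:
  assumes Z: "truncated.solves_from Z0 Z"
    and Z0: "\<And>i. i < N \<Longrightarrow> norm (fst (Z0 i)) = 1 \<and> fst (Z0 i) \<bullet> snd (Z0 i) = 0"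
    and t: "0 \<le> t" and before: "\<And>s. 0 \<le> s \<Longrightarrow> s < t \<Longrightarrow> Z s \<in> shell_states N K"
  shows "\<forall>i<N. norm (fst (Z t i)) = 1"
    and "(\<Sum>j<N. snd (Z t j) \<bullet> snd (Z t j)) \<le> (\<Sum>j<N. snd (Z0 j) \<bullet> snd (Z0 j)) + \<sigma> * N"
proof -
  define E0 where "E0 = (\<Sum>j<N. snd (Z0 j) \<bullet> snd (Z0 j)) + \<sigma> * N"
  have "(\<forall>i<N. norm (fst (Z t i)) = 1) \<and> (\<Sum>j<N. snd (Z t j) \<bullet> snd (Z t j)) \<le> E0"
  proof (cases "t = 0")
    case True
    then show ?thesis
      using Z Z0 \<sigma>_nonneg by (simp add: truncated.solves_from_def E0_def)
  next
    case False
    then have closure: "closure {0..<t} = {0..t}" "t \<in> closure {0..<t}"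
      using t by simp_all
    have inv: "norm (fst (Z s i)) = 1 \<and> (\<Sum>j<N. snd (Z s j) \<bullet> snd (Z s j)) \<le> E0"
      if "s \<in> {0..<t}" "i < N" for s i
      using truncated_solution_invariants_on[OF Z Z0, of s s i] before that by (auto simp: E0_def)
    have cont: "continuous_on {0..t} (\<lambda>s. Z s i)" if "i < N" for i
      unfolding continuous_on_eq_continuous_within
    proof
      fix s assume "s \<in> {0..t}"
      then show "continuous (at s within {0..t}) (\<lambda>s. Z s i)"
        using truncated_solution_continuous[OF Z that, of s]
        by (meson atLeastAtMost_iff atLeast_iff continuous_within_subset subsetI)
    qed
    have "norm (fst (Z t i)) = 1" if i: "i < N" for i
    proof -
      have c: "continuous_on (closure {0..<t}) (\<lambda>s. norm (fst (Z s i)))"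
        unfolding closure using cont[OF i] by (intro continuous_intros)
      have "norm (fst (Z t i)) \<le> 1"
        by (rule continuous_le_on_closure[OF c closure(2)]) (use inv i in auto)
      moreover have "1 \<le> norm (fst (Z t i))"
        by (rule continuous_ge_on_closure[OF c closure(2)]) (use inv i in auto)
      ultimately show ?thesis
        by simp
    qed
    moreover have "continuous_on (closure {0..<t}) (\<lambda>s. \<Sum>j<N. snd (Z s j) \<bullet> snd (Z s j))"
      unfolding closure using cont by (intro continuous_intros) auto
    then have "(\<Sum>j<N. snd (Z t j) \<bullet> snd (Z t j)) \<le> E0"
      by (rule continuous_le_on_closure[OF _ closure(2)]) (use inv[of _ 0] N_pos in auto)
    ultimately show ?thesis
      by blast
  qed
  then show "\<forall>i<N. norm (fst (Z t i)) = 1"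
    and "(\<Sum>j<N. snd (Z t j) \<bullet> snd (Z t j)) \<le> (\<Sum>j<N. snd (Z0 j) \<bullet> snd (Z0 j)) + \<sigma> * N"
    by (simp_all add: E0_def)
qed

lemma truncated_solution_in_shell:
  assumes Z: "truncated.solves_from Z0 Z"
    and Z0: "\<And>i. i < N \<Longrightarrow> norm (fst (Z0 i)) = 1 \<and> fst (Z0 i) \<bullet> snd (Z0 i) = 0"
    and energy: "(\<Sum>i<N. snd (Z0 i) \<bullet> snd (Z0 i)) + \<sigma> * N < K\<^sup>2"
    and t: "0 \<le> t"
  shows "Z t \<in> shell_states N K"
proof (rule real_induction_nonneg[OF _ t])
  fix t :: real assume t: "0 \<le> t" and before: "\<And>s. 0 \<le> s \<Longrightarrow> s < t \<Longrightarrow> Z s \<in> shell_states N K"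
  note inv = truncated_solution_invariants_upto[OF Z Z0 t before]
  have v: "norm (snd (Z t i)) < K" if "i < N" for i
  proof -
    have "(norm (snd (Z t i)))\<^sup>2 \<le> (\<Sum>j<N. snd (Z t j) \<bullet> snd (Z t j))"
      unfolding power2_norm_eq_inner using that by (intro member_le_sum) auto
    then have "(norm (snd (Z t i)))\<^sup>2 < K\<^sup>2"
      using inv(2) energy by linarith
    then show ?thesis
      using K_nonneg by (rule power2_less_imp_less)
  qed
  have "\<forall>\<^sub>F s in at t within {0..}.
      \<forall>i\<in>{..<N}. 1/2 < norm (fst (Z s i)) \<and> norm (fst (Z s i)) < 2 \<and> norm (snd (Z s i)) < K"
  proof (rule eventually_ball_finite, simp, intro ballI)
    fix i assume "i \<in> {..<N}"
    then have i: "i < N"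
      by simp
    have "((\<lambda>s. Z s i) \<longlongrightarrow> Z t i) (at t within {0..})"
      using truncated_solution_continuous[OF Z i t] by (simp add: continuous_within)
    then have "((\<lambda>s. norm (fst (Z s i))) \<longlongrightarrow> norm (fst (Z t i))) (at t within {0..})"
      and v': "((\<lambda>s. norm (snd (Z s i))) \<longlongrightarrow> norm (snd (Z t i))) (at t within {0..})"
      by (auto intro!: tendsto_intros)
    then have x: "((\<lambda>s. norm (fst (Z s i))) \<longlongrightarrow> 1) (at t within {0..})"
      using inv(1) i by simp
    have "\<forall>\<^sub>F s in at t within {0..}. 1/2 < norm (fst (Z s i))"
      by (rule order_tendstoD(1)[OF x]) simp
    moreover have "\<forall>\<^sub>F s in at t within {0..}. norm (fst (Z s i)) < 2"
      by (rule order_tendstoD(2)[OF x]) simp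
    moreover have "\<forall>\<^sub>F s in at t within {0..}. norm (snd (Z s i)) < K"
      by (rule order_tendstoD(2)[OF v' v[OF i]])
    ultimately show "\<forall>\<^sub>F s in at t within {0..}. 1/2 < norm (fst (Z s i)) \<and> norm (fst (Z s i)) < 2
        \<and> norm (snd (Z s i)) < K"
      by eventually_elim auto
  qed
  then obtain d where d: "0 < d" "\<And>s. s \<in> {0..} \<Longrightarrow> s \<noteq> t \<Longrightarrow> dist s t < d \<Longrightarrow>
      \<forall>i\<in>{..<N}. 1/2 < norm (fst (Z s i)) \<and> norm (fst (Z s i)) < 2 \<and> norm (snd (Z s i)) < K"
    unfolding eventually_at by blast
  show "\<exists>d>0. \<forall>s. t \<le> s \<longrightarrow> s < t + d \<longrightarrow> Z s \<in> shell_states N K"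
  proof (intro exI[of _ d] conjI allI impI d(1))
    fix s assume "t \<le> s" "s < t + d"
    then show "Z s \<in> shell_states N K"
      using d(2)[of s] inv(1) v t
      by (cases "s = t") (auto simp: shell_states_def dist_real_def less_imp_le)
  qed
qed

end

lemma lipschitz_on_Icc_if_continuous_derivative:
  fixes f f' :: "real \<Rightarrow> real"
  assumes deriv: "\<And>r. r \<in> {a..b} \<Longrightarrow> (f has_real_derivative f' r) (at r within {a..b})"
    and cont: "continuous_on {a..b} f'"
  obtains L where "0 \<le> L" "\<And>x y. x \<in> {a..b} \<Longrightarrow> y \<in> {a..b} \<Longrightarrow> \<bar>f x - f y\<bar> \<le> L * \<bar>x - y\<bar>"
proof -
  obtain B where B: "0 \<le> B" "\<And>r. r \<in> {a..b} \<Longrightarrow> \<bar>f' r\<bar> \<le> B"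
    using cont by (rule bounded_on_Icc[OF continuous_on_rabs]) blast
  show ?thesis
    using field_differentiable_bound[of "{a..b}" f f' B] deriv B
    by (intro that[of B]) (auto simp: convex_real_interval)
qed

context truncation
begin

lemma truncated_solution_solves_flocking:
  assumes Z: "truncated.solves_from (\<lambda>i. (x0 i, v0 i)) Z"
    and init: "\<And>i. i < N \<Longrightarrow> norm (x0 i) = 1 \<and> x0 i \<bullet> v0 i = 0"
    and energy: "(\<Sum>i<N. v0 i \<bullet> v0 i) + \<sigma> * N < K\<^sup>2"
  shows "is_solution N \<psi> \<sigma> x0 v0 (\<lambda>i t. fst (Z t i)) (\<lambda>i t. snd (Z t i))"
    and "\<And>i t. i < N \<Longrightarrow> 0 \<le> t \<Longrightarrow> norm (fst (Z t i)) = 1"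
proof -
  have Z0: "\<And>i. i < N \<Longrightarrow> norm (fst (x0 i, v0 i)) = 1 \<and> fst (x0 i, v0 i) \<bullet> snd (x0 i, v0 i) = 0"
    using init by simp
  have shell: "Z t \<in> shell_states N K" if "0 \<le> t" for t
    using truncated_solution_in_shell[OF Z Z0] energy that by simp
  have inv: "norm (fst (Z t i)) = 1 \<and> fst (Z t i) \<bullet> snd (Z t i) = 0" if "i < N" "0 \<le> t" for i t
    using truncated_solution_invariants_on[OF Z Z0, of t t i] shell that by auto
  then show "\<And>i t. i < N \<Longrightarrow> 0 \<le> t \<Longrightarrow> norm (fst (Z t i)) = 1"
    by blast
  have field: "truncated_field (Z t) i = (snd (Z t i), accel N \<psi> \<sigma> (\<lambda>i t. fst (Z t i)) (\<lambda>i t. snd (Z t i)) i t)"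
    if i: "i < N" and t: "0 \<le> t" for i t
  proof -
    have "Z t \<in> sphere_states N K"
      using shell[OF t] inv[OF _ t] by (auto simp: shell_states_def sphere_states_def)
    then show ?thesis
      using tangent_accel_ext_eq[OF shell[OF t] i] tangent_accel_sphere_states[of "Z t" i] inv[OF _ t] i
      by (simp add: truncated_field_def accel_eq_coupling)
  qed
  show "is_solution N \<psi> \<sigma> x0 v0 (\<lambda>i t. fst (Z t i)) (\<lambda>i t. snd (Z t i))"
    unfolding is_solution_def
  proof (intro allI impI conjI)
    fix i assume i: "i < N"
    show "fst (Z 0 i) = x0 i" "snd (Z 0 i) = v0 i"
      using Z i by (simp_all add: truncated.solves_from_def)
    fix t :: real assume t: "0 \<le> t"
    have "((\<lambda>t. Z t i) has_vector_derivative truncated_field (Z t) i) (at t within {0..})"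
      using Z i t by (simp add: truncated.solves_from_def)
    then show "((\<lambda>t. fst (Z t i)) has_vector_derivative snd (Z t i)) (at t within {0..})"
      and "((\<lambda>t. snd (Z t i)) has_vector_derivative
        accel N \<psi> \<sigma> (\<lambda>i t. fst (Z t i)) (\<lambda>i t. snd (Z t i)) i t) (at t within {0..})"
      using has_vector_derivative_fst has_vector_derivative_snd field[OF i t] by fastforce+
  qed
qed

lemma flocking_solution_eq_truncated:
  assumes Z: "truncated.solves_from (\<lambda>i. (x0 i, v0 i)) Z"
    and init: "\<And>i. i < N \<Longrightarrow> norm (x0 i) = 1 \<and> x0 i \<bullet> v0 i = 0"
    and energy: "(\<Sum>i<N. v0 i \<bullet> v0 i) + \<sigma> * N < K\<^sup>2"
    and sol: "is_solution N \<psi> \<sigma> x0 v0 y w" and i: "i < N" and t: "0 \<le> t"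
  shows "y i t = fst (Z t i) \<and> w i t = snd (Z t i)"
proof -
  have y0: "y j 0 = x0 j" "w j 0 = v0 j" if "j < N" for j
    using sol that by (simp_all add: is_solution_def)
  have dy: "(y j has_vector_derivative w j s) (at s within {0..})"
    and dw: "(w j has_vector_derivative accel N \<psi> \<sigma> y w j s) (at s within {0..})" if "j < N" "0 \<le> s" for j s
    using sol that by (simp_all add: is_solution_def)
  have inv: "norm (y j s) = 1 \<and> y j s \<bullet> w j s = 0 \<and> norm (w j s) < K" if j: "j < N" and s: "0 \<le> s" for j s
  proof -
    have dyT: "(y k has_vector_derivative w k r) (at r within {0..s})"
      and dwT: "(w k has_vector_derivative accel N \<psi> \<sigma> y w k r) (at r within {0..s})"
      if "k < N" "r \<in> {0..s}" for k r
      using dy[of k r] dw[of k r] that by (auto intro: has_vector_derivative_within_subset)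
    have sphere: "norm (y k r) = 1 \<and> y k r \<bullet> w k r = 0" if "k < N" "r \<in> {0..s}" for k r
      using sphere_tangency_invariant[OF dyT dwT _ that(2,1)] init y0 by simp
    have "(norm (w j s))\<^sup>2 \<le> (\<Sum>k<N. w k s \<bullet> w k s)"
      unfolding power2_norm_eq_inner using j by (intro member_le_sum) auto
    also have "\<dots> \<le> (\<Sum>k<N. w k 0 \<bullet> w k 0) + \<sigma> * N"
      using dyT dwT sphere s by (intro kinetic_energy_bound) auto
    also have "\<dots> < K\<^sup>2"
      using energy y0 by simp
    finally show ?thesis
      using sphere[OF j] s K_nonneg power2_less_imp_less by auto
  qed
  define W where "W s j = (y j s, w j s)" for s j
  have "truncated_field (W s) j = (w j s, accel N \<psi> \<sigma> y w j s)" if j: "j < N" and s: "0 \<le> s" for j s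
  proof -
    have sphere: "W s \<in> sphere_states N K"
      using inv[OF _ s] by (auto simp: W_def sphere_states_def less_imp_le)
    then have "W s \<in> shell_states N K"
      using sphere_states_subset_shell_states by blast
    then show ?thesis
      using tangent_accel_ext_eq[of "W s" j] tangent_accel_sphere_states[OF sphere _ j] inv[OF _ s] j
      by (simp add: truncated_field_def accel_eq_coupling W_def[abs_def])
  qed
  then have "truncated.solves_from (\<lambda>i. (x0 i, v0 i)) W"
    unfolding truncated.solves_from_def using y0 dy dw
    by (auto simp: W_def intro!: has_vector_derivative_Pair)
  then have "W t i = Z t i"
    using Z i t by (rule truncated.solution_unique)
  then show ?thesis
    by (metis W_def fst_conv snd_conv)
qed

end

context flocking
begin

theorem exists_unique_solution:
  assumes init: "\<And>i. i < N \<Longrightarrow> norm (x0 i) = 1 \<and> x0 i \<bullet> v0 i = 0"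
  shows "\<exists>x v. is_solution N \<psi> \<sigma> x0 v0 x v
    \<and> (\<forall>y w. is_solution N \<psi> \<sigma> x0 v0 y w \<longrightarrow> (\<forall>i<N. \<forall>t\<ge>0. y i t = x i t \<and> w i t = v i t))
    \<and> (\<forall>i<N. \<forall>t>0. norm (x i t) = 1)"
proof -
  define E where "E = (\<Sum>i<N. v0 i \<bullet> v0 i) + \<sigma> * N"
  have E: "0 \<le> E"
    using \<sigma>_nonneg by (simp add: E_def sum_nonneg)
  then have energy: "E < (sqrt E + 1)\<^sup>2"
    by (simp add: power2_sum add_pos_nonneg)
  interpret truncation \<psi> Lp \<sigma> N "sqrt E + 1"
    by unfold_locales (use E in simp)
  define Z where "Z = truncated.picard_limit (\<lambda>i. (x0 i, v0 i))"
  have Z: "truncated.solves_from (\<lambda>i. (x0 i, v0 i)) Z"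
    unfolding Z_def by (rule truncated.exists_solution)
  have energy': "(\<Sum>i<N. v0 i \<bullet> v0 i) + \<sigma> * N < (sqrt E + 1)\<^sup>2"
    using energy by (simp add: E_def)
  note solves = truncated_solution_solves_flocking[OF Z init energy']
  show ?thesis
  proof (intro exI conjI)
    show "is_solution N \<psi> \<sigma> x0 v0 (\<lambda>i t. fst (Z t i)) (\<lambda>i t. snd (Z t i))"
      by (rule solves(1))
    show "\<forall>y w. is_solution N \<psi> \<sigma> x0 v0 y w \<longrightarrow>
        (\<forall>i<N. \<forall>t\<ge>0. y i t = fst (Z t i) \<and> w i t = snd (Z t i))"
      using flocking_solution_eq_truncated[OF Z init energy'] by blast
    show "\<forall>i<N. \<forall>t>0. norm (fst (Z t i)) = 1"
      using solves(2) by simp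
  qed
qed

end

theorem theorem3p1:
  fixes N :: nat and \<sigma> :: real and \<psi> :: "real \<Rightarrow> real"
    and x0 v0 :: "nat \<Rightarrow> real^3"
  assumes "N \<ge> 1" and "\<sigma> \<ge> 0"
    and "\<forall>r\<in>{0..2}. \<psi> r \<ge> 0"
    and "antimono_on {0..2} \<psi>"
    and "\<exists>\<psi>'. (\<forall>r\<in>{0..2}. (\<psi> has_real_derivative \<psi>' r) (at r within {0..2}))
              \<and> continuous_on {0..2} \<psi>' \<and> \<psi>' 2 < 0"
    and "\<psi> 2 = 0"
    and "\<forall>i<N. norm (x0 i) = 1 \<and> v0 i \<bullet> x0 i = 0"
  shows "\<exists>x v. is_solution N \<psi> \<sigma> x0 v0 x v
           \<and> (\<forall>y w. is_solution N \<psi> \<sigma> x0 v0 y w \<longrightarrow>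
                 (\<forall>i<N. \<forall>t\<ge>0. y i t = x i t \<and> w i t = v i t))
           \<and> (\<forall>i<N. \<forall>t>0. norm (x i t) = 1)"
proof -
  obtain \<psi>' where deriv: "\<And>r. r \<in> {0..2} \<Longrightarrow> (\<psi> has_real_derivative \<psi>' r) (at r within {0..2})"
    and cont: "continuous_on {0..2} \<psi>'"
    using assms(5) by blast
  obtain Lp where "0 \<le> Lp" "\<And>x y. x \<in> {0..2} \<Longrightarrow> y \<in> {0..2} \<Longrightarrow> \<bar>\<psi> x - \<psi> y\<bar> \<le> Lp * \<bar>x - y\<bar>"
    using lipschitz_on_Icc_if_continuous_derivative[OF deriv cont] by blast
  then interpret flocking \<psi> Lp \<sigma> N
    using assms(1-3,6) by unfold_locales auto
  show ?thesis
    using assms(7) by (intro exists_unique_solution) (simp add: inner_commute)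
qed

end
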